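(* Let $\mathcal{T}$ be a trivalent tree with $n\ge 3$ labelled leaves and $Q_{\mathcal{T}}(sl_3(\mathbb{C}))$ as in the context. For every proper subtree $\mathcal{T}'\subset\mathcal{T}$ there are exactly two minimal generators of $Q_{\mathcal{T}}(sl_3(\mathbb{C}))$ whose support is $\mathcal{T}'$, and every minimal generator arises in this way. Consequently $Q_{\mathcal{T}}(sl_3(\mathbb{C}))$ has exactly $2(2^n-n-1)$ minimal generators.
   Context: A Berenstein–Zelevinsky (BZ) triangle for $sl_3(\mathbb{C})$ is a $9$-tuple of nonnegative integers $(a,b,c,d,e,f,g,h,i)$ placed on the vertices of a triangular diagram with rows $a$; $b\ c$; $d\ e$; $f\ g\ h\ i$, so that the sides of the big triangle, oriented counterclockwise, read: side 1 $=(a,b,d,f)$, side 2 $=(f,g,h,i)$, side 3 $=(i,e,c,a)$, and $b,c,e,h,g,d$ form (in this cyclic order) a central hexagon. The entries satisfy $b+c=g+h$, $c+e=d+g$, $e+h=b+d$. The boundary weight of a side read as $(x_1,x_2,x_3,x_4)$ is $(x_1+x_2)\omega_1+(x_3+x_4)\omega_2$, identified with $(x_1+x_2,x_3+x_4)\in\mathbb{Z}_{\ge0}^2$. Let $\mathcal{T}$ be a tree whose non-leaf vertices (trinodes) all have degree $3$, with leaves labelled $1,\dots,n$. Attach to each trinode $v$ a BZ triangle, with a fixed bijection between its sides (counterclockwise) and the edges at $v$. $Q_{\mathcal{T}}(sl_3(\mathbb{C}))$ is the semigroup under entrywise addition of such assignments such that for each edge joining trinodes $v,v'$, if $v$'s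 side on that edge has boundary weight $(p,q)$ then $v'$'s side on it has boundary weight $(q,p)$. The weight on a leaf edge is the boundary weight of the corresponding side of the adjacent trinode's triangle. The support of $w\in Q_{\mathcal{T}}(sl_3(\mathbb{C}))$ is the set of edges of $\mathcal{T}$ on which the boundary weight of $w$ is nonzero. A subtree $\mathcal{T}'\subset\mathcal{T}$ (connected subgraph with at least one edge) is proper if every leaf of $\mathcal{T}'$ is a leaf of $\mathcal{T}$; proper subtrees correspond to subsets of at least two leaves of $\mathcal{T}$. *)

theory Defs
  imports Main
begin

definition adj :: "'v set set \<Rightarrow> 'v \<Rightarrow> 'v \<Rightarrow> bool" where
  "adj E u v \<longleftrightarrow> {u, v} \<in> E"

definition graph_connected :: "'v set \<Rightarrow> 'v set set \<Rightarrow> bool" where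
  "graph_connected V E \<longleftrightarrow> (\<forall>u\<in>V. \<forall>v\<in>V. (adj E)\<^sup>*\<^sup>* u v)"

definition simple_graph :: "'v set \<Rightarrow> 'v set set \<Rightarrow> bool" where
  "simple_graph V E \<longleftrightarrow> E \<subseteq> {{u, v} | u v. u \<in> V \<and> v \<in> V \<and> u \<noteq> v}"

definition is_tree :: "'v set \<Rightarrow> 'v set set \<Rightarrow> bool" where
  "is_tree V E \<longleftrightarrow> finite V \<and> simple_graph V E \<and> graph_connected V E \<and>
     (\<forall>e\<in>E. \<not> graph_connected V (E - {e}))"

definition deg :: "'v set set \<Rightarrow> 'v \<Rightarrow> nat" where
  "deg E v = card {e \<in> E. v \<in> e}"

definition leaves :: "'v set \<Rightarrow> 'v set set \<Rightarrow> 'v set" where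
  "leaves V E = {v \<in> V. deg E v = 1}"

definition trinodes :: "'v set \<Rightarrow> 'v set set \<Rightarrow> 'v set" where
  "trinodes V E = {v \<in> V. deg E v = 3}"

definition trivalent_tree :: "'v set \<Rightarrow> 'v set set \<Rightarrow> bool" where
  "trivalent_tree V E \<longleftrightarrow> is_tree V E \<and> (\<forall>v\<in>V. deg E v = 1 \<or> deg E v = 3)"

text \<open>Side labelling: at each trinode v, sides 1,2,3 (counterclockwise) are in bijection
  with the edges at v.\<close>
definition side_labelling :: "'v set \<Rightarrow> 'v set set \<Rightarrow> ('v \<Rightarrow> nat \<Rightarrow> 'v set) \<Rightarrow> bool" where
  "side_labelling V E sd \<longleftrightarrow>
     (\<forall>v\<in>trinodes V E. bij_betw (sd v) {1, 2, 3} {e \<in> E. v \<in> e})"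

definition proper_subtree :: "'v set \<Rightarrow> 'v set set \<Rightarrow> 'v set set \<Rightarrow> bool" where
  "proper_subtree V E E' \<longleftrightarrow> E' \<subseteq> E \<and> E' \<noteq> {} \<and> graph_connected (\<Union>E') E' \<and>
     (\<forall>x\<in>\<Union>E'. deg E' x = 1 \<longrightarrow> x \<in> leaves V E)"

text \<open>A BZ triangle (a,b,c,d,e,f,g,h,i) is encoded as t :: nat \<Rightarrow> nat with
  t 0 = a, t 1 = b, t 2 = c, t 3 = d, t 4 = e, t 5 = f, t 6 = g, t 7 = h, t 8 = i,
  and t k = 0 for k \<ge> 9.\<close>
definition is_bz :: "(nat \<Rightarrow> nat) \<Rightarrow> bool" where
  "is_bz t \<longleftrightarrow> t 1 + t 2 = t 6 + t 7 \<and> t 2 + t 4 = t 3 + t 6 \<and> t 4 + t 7 = t 1 + t 3 \<and>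
     (\<forall>k\<ge>9. t k = 0)"

text \<open>Boundary weights: side 1 = (a,b,d,f), side 2 = (f,g,h,i), side 3 = (i,e,c,a);
  a side (x1,x2,x3,x4) has weight (x1+x2, x3+x4).\<close>
definition side_weight :: "(nat \<Rightarrow> nat) \<Rightarrow> nat \<Rightarrow> nat \<times> nat" where
  "side_weight t j =
     (if j = 1 then (t 0 + t 1, t 3 + t 5)
      else if j = 2 then (t 5 + t 6, t 7 + t 8)
      else (t 8 + t 4, t 2 + t 0))"

text \<open>Elements: w v is the BZ triangle at trinode v (and identically 0 elsewhere).\<close>
definition inQ :: "'v set \<Rightarrow> 'v set set \<Rightarrow> ('v \<Rightarrow> nat \<Rightarrow> 'v set) \<Rightarrow> ('v \<Rightarrow> nat \<Rightarrow> nat) \<Rightarrow> bool" where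
  "inQ V E sd w \<longleftrightarrow>
     (\<forall>v. v \<notin> trinodes V E \<longrightarrow> (\<forall>k. w v k = 0)) \<and>
     (\<forall>v\<in>trinodes V E. is_bz (w v)) \<and>
     (\<forall>v\<in>trinodes V E. \<forall>v'\<in>trinodes V E. \<forall>j\<in>{1,2,3}. \<forall>j'\<in>{1,2,3}.
        v \<noteq> v' \<longrightarrow> sd v j = sd v' j' \<longrightarrow> side_weight (w v) j = prod.swap (side_weight (w v') j'))"

definition zeroQ :: "'v \<Rightarrow> nat \<Rightarrow> nat" where
  "zeroQ = (\<lambda>v k. 0)"

definition addQ :: "('v \<Rightarrow> nat \<Rightarrow> nat) \<Rightarrow> ('v \<Rightarrow> nat \<Rightarrow> nat) \<Rightarrow> ('v \<Rightarrow> nat \<Rightarrow> nat)" where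
  "addQ u w = (\<lambda>v k. u v k + w v k)"

text \<open>Support: edges on which the boundary weight is nonzero (the weight on an edge is read
  off from the side of an adjacent trinode; on internal edges the two readings agree up to swap).\<close>
definition supp :: "'v set \<Rightarrow> 'v set set \<Rightarrow> ('v \<Rightarrow> nat \<Rightarrow> 'v set) \<Rightarrow> ('v \<Rightarrow> nat \<Rightarrow> nat) \<Rightarrow> 'v set set" where
  "supp V E sd w = {e \<in> E. \<exists>v\<in>trinodes V E. \<exists>j\<in>{1,2,3}. sd v j = e \<and> side_weight (w v) j \<noteq> (0, 0)}"

definition min_gen :: "'v set \<Rightarrow> 'v set set \<Rightarrow> ('v \<Rightarrow> nat \<Rightarrow> 'v set) \<Rightarrow> ('v \<Rightarrow> nat \<Rightarrow> nat) \<Rightarrow> bool" where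
  "min_gen V E sd w \<longleftrightarrow> inQ V E sd w \<and> w \<noteq> zeroQ \<and>
     \<not> (\<exists>u1 u2. inQ V E sd u1 \<and> inQ V E sd u2 \<and> u1 \<noteq> zeroQ \<and> u2 \<noteq> zeroQ \<and> w = addQ u1 u2)"

end

theory Submission
  imports Defs
begin

(* A BZ triangle vanishes as soon as its three boundary weights do, and it never has exactly one
   nonzero side; so a nonzero BZ triangle has total boundary weight at least 2. The eight 0/1
   triangles ("atoms") have total boundary weight at most 3, hence are indecomposable, and every
   BZ triangle contains an atom carrying a prescribed unit weight on any nonzero side.
   On a tree, atoms can be glued outwards from one trinode, matching weights across each edge;
   acyclicity keeps the gluing consistent. Gluing atoms below a minimal generator exhausts it, so
   the minimal generators are exactly the elements carrying an atom or nothing at each trinode and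
   having connected support. Such a support is a proper subtree, and along a proper subtree the
   element is determined by the unit weight on a single edge, which has two possible values.
   Finally a proper subtree is determined by its set of leaves, any set of at least two leaves
   occurs, and there are 2^n - n - 1 such sets. *)

section \<open>BZ triangles and atoms\<close>

definition atom :: "nat set \<Rightarrow> nat \<Rightarrow> nat" where
  "atom K = (\<lambda>k. if k \<in> K then 1 else 0)"

text \<open>In the notation (a,...,i) of the triangle the atoms are a, f, i, de, cg, bh, cdh and beg.\<close>
definition atoms :: "(nat \<Rightarrow> nat) set" where
  "atoms = {atom {0}, atom {5}, atom {8}, atom {3,4}, atom {2,6}, atom {1,7}, atom {2,3,7}, atom {1,4,6}}"

definition boundary_size :: "(nat \<Rightarrow> nat) \<Rightarrow> nat" where
  "boundary_size t = (\<Sum>j\<in>{1,2,3}. fst (side_weight t j) + snd (side_weight t j))"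

lemma side_weight_zero [simp]: "side_weight (\<lambda>k. 0) j = (0,0)"
  by (simp add: side_weight_def)

lemma less_9_cases:
  "(k::nat) < 9 \<Longrightarrow> k = 0 \<or> k = 1 \<or> k = 2 \<or> k = 3 \<or> k = 4 \<or> k = 5 \<or> k = 6 \<or> k = 7 \<or> k = 8"
  by presburger

lemma bz_eq_zeroI:
  assumes "is_bz t" "\<forall>j\<in>{1,2,3}. side_weight t j = (0,0)"
  shows "t = (\<lambda>k. 0)"
proof
  fix k
  have "t 1 + t 2 = t 6 + t 7" "t 4 + t 7 = t 1 + t 3"
    using assms(1) by (auto simp: is_bz_def)
  moreover have "side_weight t 1 = (0,0)" "side_weight t 2 = (0,0)" "side_weight t 3 = (0,0)"
    using assms(2) by auto
  ultimately show "t k = 0"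
    using assms(1) by (cases "k < 9") (auto dest!: less_9_cases simp: side_weight_def is_bz_def)
qed

lemma bz_second_nonzero_side:
  assumes "is_bz t" "j \<in> {1,2,3}" "side_weight t j \<noteq> (0,0)"
  shows "\<exists>j'\<in>{1,2,3}. j' \<noteq> j \<and> side_weight t j' \<noteq> (0,0)"
proof (rule ccontr)
  assume "\<not> ?thesis"
  then have "\<forall>j'\<in>{1,2,3}. j' \<noteq> j \<longrightarrow> side_weight t j' = (0,0)"
    by auto
  moreover have "t 1 + t 2 = t 6 + t 7" "t 2 + t 4 = t 3 + t 6" "t 4 + t 7 = t 1 + t 3"
    using assms(1) by (auto simp: is_bz_def)
  ultimately show False
    using assms(2,3) by (auto simp: side_weight_def)
qed

lemma card_nonzero_sides_ne_1:
  assumes "is_bz t"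
  shows "card {j \<in> {1::nat,2,3}. side_weight t j \<noteq> (0,0)} \<noteq> 1"
proof
  assume "card {j \<in> {1::nat,2,3}. side_weight t j \<noteq> (0,0)} = 1"
  then obtain j where j: "{j \<in> {1::nat,2,3}. side_weight t j \<noteq> (0,0)} = {j}"
    using card_1_singletonE by blast
  then obtain j' where "j' \<in> {1,2,3}" "j' \<noteq> j" "side_weight t j' \<noteq> (0,0)"
    using bz_second_nonzero_side[OF assms, of j] by blast
  then show False
    using j by blast
qed

lemma bz_boundary_size_ge_2:
  assumes "is_bz t" "t \<noteq> (\<lambda>k. 0)"
  shows "2 \<le> boundary_size t"
proof -
  obtain j where j: "j \<in> {1,2,3}" "side_weight t j \<noteq> (0,0)"
    using bz_eq_zeroI[OF assms(1)] assms(2) by blast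
  then obtain j' where j': "j' \<in> {1,2,3}" "j' \<noteq> j" "side_weight t j' \<noteq> (0,0)"
    using bz_second_nonzero_side[OF assms(1)] by blast
  have "\<forall>i\<in>{1,2,3}. side_weight t i \<noteq> (0,0) \<longrightarrow> 1 \<le> fst (side_weight t i) + snd (side_weight t i)"
    by (auto simp: prod_eq_iff)
  then show ?thesis
    using j j' unfolding boundary_size_def by (auto simp: side_weight_def)
qed

lemma boundary_size_add:
  "boundary_size (\<lambda>k. t1 k + t2 k) = boundary_size t1 + boundary_size t2"
  by (simp add: boundary_size_def side_weight_def)

lemma atom_boundary_size: "s \<in> atoms \<Longrightarrow> boundary_size s \<le> 3"
  unfolding atoms_def by (elim insertE emptyE) (simp_all add: boundary_size_def side_weight_def atom_def)

lemma atom_is_bz: "s \<in> atoms \<Longrightarrow> is_bz s"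
  by (auto simp: atoms_def is_bz_def atom_def)

lemma atom_nonzero: "s \<in> atoms \<Longrightarrow> s \<noteq> (\<lambda>k. 0)"
  by (auto simp: atoms_def atom_def fun_eq_iff)

lemma atom_indecomposable:
  assumes "s \<in> atoms" "is_bz t1" "is_bz t2" "\<forall>k. t1 k + t2 k = s k"
  shows "t1 = (\<lambda>k. 0) \<or> t2 = (\<lambda>k. 0)"
proof (rule ccontr)
  assume "\<not> ?thesis"
  then have "4 \<le> boundary_size t1 + boundary_size t2"
    using bz_boundary_size_ge_2 assms(2,3) by (metis add_mono numeral_Bit0)
  also have "\<dots> = boundary_size s"
    using assms(4) boundary_size_add[of t1 t2] by (simp add: fun_eq_iff)
  finally show False
    using atom_boundary_size[OF assms(1)] by simp
qed

lemma atom_unique: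
  assumes "s1 \<in> atoms" "s2 \<in> atoms"
    and "\<forall>j\<in>{1,2,3}. (side_weight s1 j = (0,0)) = (side_weight s2 j = (0,0))"
    and "j \<in> {1,2,3}" "side_weight s1 j = side_weight s2 j" "side_weight s1 j \<noteq> (0,0)"
  shows "s1 = s2"
  using assms unfolding atoms_def by (elim insertE emptyE) (auto simp: side_weight_def atom_def)

lemma atom_side_weight:
  "s \<in> atoms \<Longrightarrow> j \<in> {1,2,3} \<Longrightarrow> side_weight s j \<in> {(0,0), (1,0), (0,1)}"
  unfolding atoms_def by (elim insertE emptyE; auto simp: atom_def side_weight_def)

lemma atom_with_support:
  assumes "J \<subseteq> {1,2,3}" "2 \<le> card J" "j \<in> J" "x \<in> {(1,0), (0,1)}"
  shows "\<exists>s\<in>atoms. (\<forall>j'\<in>{1,2,3}. side_weight s j' \<noteq> (0,0) \<longleftrightarrow> j' \<in> J) \<and> side_weight s j = x"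
proof -
  have "J \<in> {{1,2}, {1,3}, {2,3}, {1,2,3}}"
  proof -
    have "J \<in> Pow {1,2,3}"
      using assms(1) by simp
    also have "Pow {1::nat,2,3} = {{}, {1}, {2}, {3}, {1,2}, {1,3}, {2,3}, {1,2,3}}"
      by (auto simp: Pow_insert)
    finally show ?thesis
      using assms(2) by (elim insertE emptyE) simp_all
  qed
  then show ?thesis
    using assms(3,4) by (elim insertE emptyE; auto simp: atoms_def side_weight_def atom_def)
qed

text \<open>In each case the relevant entry of side j is either a corner entry, which is an atom by itself,
  or an edge entry p; then one of the hexagon relations forces the entry after p (hence a two-entry
  atom) or the two entries after it (hence a three-entry atom) to be positive as well.\<close>
lemma bz_contains_atom:
  assumes bz: "is_bz t" and j: "j \<in> {1,2,3}" and x: "x \<in> {(1,0), (0,1)}"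
    and le: "fst x \<le> fst (side_weight t j)" "snd x \<le> snd (side_weight t j)"
  shows "\<exists>s\<in>atoms. (\<forall>k. s k \<le> t k) \<and> side_weight s j = x"
proof -
  have h: "t 1 + t 2 = t 6 + t 7" "t 2 + t 4 = t 3 + t 6" "t 4 + t 7 = t 1 + t 3"
    using bz by (auto simp: is_bz_def)
  have atom_below: "?thesis" if "atom K \<in> atoms" "\<forall>k\<in>K. 1 \<le> t k" "side_weight (atom K) j = x" for K
    using that by (intro bexI[of _ "atom K"]) (auto simp: atom_def)
  consider "j = 1" "x = (1,0)" | "j = 1" "x = (0,1)" | "j = 2" "x = (1,0)" | "j = 2" "x = (0,1)"
    | "j = 3" "x = (1,0)" | "j = 3" "x = (0,1)"
    using j x by auto
  then show ?thesis
  proof cases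
    case 1
    then have "1 \<le> t 0 \<or> 1 \<le> t 1 \<and> 1 \<le> t 7 \<or> 1 \<le> t 1 \<and> 1 \<le> t 4 \<and> 1 \<le> t 6"
      using le h by (simp add: side_weight_def) linarith
    then show ?thesis
      using atom_below[of "{0}"] atom_below[of "{1,7}"] atom_below[of "{1,4,6}"] 1
      by (auto simp: atoms_def side_weight_def atom_def)
  next
    case 2
    then have "1 \<le> t 5 \<or> 1 \<le> t 3 \<and> 1 \<le> t 4 \<or> 1 \<le> t 3 \<and> 1 \<le> t 2 \<and> 1 \<le> t 7"
      using le h by (simp add: side_weight_def) linarith
    then show ?thesis
      using atom_below[of "{5}"] atom_below[of "{3,4}"] atom_below[of "{2,3,7}"] 2
      by (auto simp: atoms_def side_weight_def atom_def)
  next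
    case 3
    then have "1 \<le> t 5 \<or> 1 \<le> t 6 \<and> 1 \<le> t 2 \<or> 1 \<le> t 6 \<and> 1 \<le> t 1 \<and> 1 \<le> t 4"
      using le h by (simp add: side_weight_def) linarith
    then show ?thesis
      using atom_below[of "{5}"] atom_below[of "{2,6}"] atom_below[of "{1,4,6}"] 3
      by (auto simp: atoms_def side_weight_def atom_def)
  next
    case 4
    then have "1 \<le> t 8 \<or> 1 \<le> t 7 \<and> 1 \<le> t 1 \<or> 1 \<le> t 7 \<and> 1 \<le> t 2 \<and> 1 \<le> t 3"
      using le h by (simp add: side_weight_def) linarith
    then show ?thesis
      using atom_below[of "{8}"] atom_below[of "{1,7}"] atom_below[of "{2,3,7}"] 4
      by (auto simp: atoms_def side_weight_def atom_def)
  next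
    case 5
    then have "1 \<le> t 8 \<or> 1 \<le> t 4 \<and> 1 \<le> t 3 \<or> 1 \<le> t 4 \<and> 1 \<le> t 1 \<and> 1 \<le> t 6"
      using le h by (simp add: side_weight_def) linarith
    then show ?thesis
      using atom_below[of "{8}"] atom_below[of "{3,4}"] atom_below[of "{1,4,6}"] 5
      by (auto simp: atoms_def side_weight_def atom_def)
  next
    case 6
    then have "1 \<le> t 0 \<or> 1 \<le> t 2 \<and> 1 \<le> t 6 \<or> 1 \<le> t 2 \<and> 1 \<le> t 3 \<and> 1 \<le> t 7"
      using le h by (simp add: side_weight_def) linarith
    then show ?thesis
      using atom_below[of "{0}"] atom_below[of "{2,6}"] atom_below[of "{2,3,7}"] 6
      by (auto simp: atoms_def side_weight_def atom_def)
  qed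
qed

lemma bz_diff:
  assumes "is_bz s" "is_bz t" "\<forall>k. s k \<le> t k"
  shows "is_bz (\<lambda>k. t k - s k)"
proof -
  have "s 1 \<le> t 1" "s 2 \<le> t 2" "s 3 \<le> t 3" "s 4 \<le> t 4" "s 6 \<le> t 6" "s 7 \<le> t 7"
    using assms(3) by auto
  then show ?thesis
    using assms(1,2) unfolding is_bz_def by simp
qed

lemma side_weight_mono:
  "\<forall>k. s k \<le> t k \<Longrightarrow> fst (side_weight s j) \<le> fst (side_weight t j) \<and> snd (side_weight s j) \<le> snd (side_weight t j)"
  by (simp add: side_weight_def add_mono)

lemma side_weight_diff:
  "\<forall>k. s k \<le> t k \<Longrightarrow> side_weight (\<lambda>k. t k - s k) j =
     (fst (side_weight t j) - fst (side_weight s j), snd (side_weight t j) - snd (side_weight s j))"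
  by (simp add: side_weight_def)

section \<open>Trees\<close>

lemma rtranclp_map:
  assumes "R\<^sup>*\<^sup>* u v" "\<And>a b. R a b \<Longrightarrow> S\<^sup>*\<^sup>* (f a) (f b)"
  shows "S\<^sup>*\<^sup>* (f u) (f v)"
  using assms(1)
proof (induction rule: rtranclp_induct)
  case (step y z)
  then show ?case
    using assms(2) rtranclp_trans by metis
qed simp

lemma rtranclp_lift:
  assumes "R\<^sup>*\<^sup>* u v" "\<And>a b. R a b \<Longrightarrow> S\<^sup>*\<^sup>* a b"
  shows "S\<^sup>*\<^sup>* u v"
  using rtranclp_map[of R u v S id] assms by simp

lemma rtranclp_closed:
  assumes "R\<^sup>*\<^sup>* a z" "a \<in> U" "\<And>u w. u \<in> U \<Longrightarrow> R u w \<Longrightarrow> w \<in> U"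
  shows "z \<in> U"
  using assms(1) by induction (use assms(2,3) in blast)+

lemma symp_adj: "symp (adj F)"
  by (auto intro: sympI simp: adj_def insert_commute)

lemma adj_rtranclp_sym: "(adj F)\<^sup>*\<^sup>* x y \<Longrightarrow> (adj F)\<^sup>*\<^sup>* y x"
  using symp_rtranclp[OF symp_adj] by (rule sympD)

lemma adj_rtranclp_mono: "(adj F)\<^sup>*\<^sup>* x y \<Longrightarrow> F \<subseteq> G \<Longrightarrow> (adj G)\<^sup>*\<^sup>* x y"
  by (erule rtranclp_lift) (metis adj_def r_into_rtranclp subsetD)

lemma graph_connectedI_from:
  assumes "\<forall>x\<in>\<Union>F. (adj F)\<^sup>*\<^sup>* x0 x"
  shows "graph_connected (\<Union>F) F"
  unfolding graph_connected_def
  using assms by (meson adj_rtranclp_sym rtranclp_trans)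

lemma connected_isolated_edge:
  assumes "graph_connected (\<Union>G) G" "{x,y} \<in> G"
    and "\<And>g. g \<in> G \<Longrightarrow> x \<in> g \<Longrightarrow> g = {x,y}" "\<And>g. g \<in> G \<Longrightarrow> y \<in> g \<Longrightarrow> g = {x,y}"
  shows "\<Union>G \<subseteq> {x,y}"
proof
  fix z assume "z \<in> \<Union>G"
  then have "(adj G)\<^sup>*\<^sup>* x z"
    using assms(1,2) unfolding graph_connected_def by blast
  then show "z \<in> {x,y}"
    by (rule rtranclp_closed) (use assms(3,4) in \<open>auto simp: adj_def doubleton_eq_iff\<close>)
qed

lemma card_subsets_ge_2:
  assumes "finite A"
  shows "card {S. S \<subseteq> A \<and> 2 \<le> card S} = 2 ^ card A - card A - 1"
proof -
  let ?B = "{S. S \<subseteq> A \<and> 2 \<le> card S}"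
  let ?S0 = "{S. S \<subseteq> A \<and> card S = 0}"
  let ?S1 = "{S. S \<subseteq> A \<and> card S = 1}"
  have fin: "finite ?B" "finite ?S0" "finite ?S1"
    using assms by (auto intro: finite_subset[of _ "Pow A"])
  have "Pow A = ?B \<union> (?S0 \<union> ?S1)"
    by auto
  then have "card (Pow A) = card ?B + (card ?S0 + card ?S1)"
    using fin by (simp add: card_Un_disjoint disjoint_iff)
  moreover have "card ?S0 = 1" "card ?S1 = card A"
    using n_subsets[OF assms, of 0] n_subsets[OF assms, of 1] by simp_all
  ultimately show ?thesis
    using card_Pow[of A] assms by simp
qed

lemma connected_remove_pendant_edge:
  assumes conn: "graph_connected (\<Union>G) G" and f: "{x,y} \<in> G" "x \<noteq> y"
    and pendant: "\<And>g. g \<in> G \<Longrightarrow> x \<in> g \<Longrightarrow> g = {x,y}"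
  shows "graph_connected (\<Union>(G - {{x,y}})) (G - {{x,y}})"
  unfolding graph_connected_def
proof (intro ballI)
  fix a b assume ab: "a \<in> \<Union>(G - {{x,y}})" "b \<in> \<Union>(G - {{x,y}})"
  define \<phi> where "\<phi> z = (if z = x then y else z)" for z
  have "a \<noteq> x" "b \<noteq> x"
    using ab pendant by blast+
  moreover have "(adj G)\<^sup>*\<^sup>* a b"
    using conn ab unfolding graph_connected_def by blast
  then have "(adj (G - {{x,y}}))\<^sup>*\<^sup>* (\<phi> a) (\<phi> b)"
  proof (rule rtranclp_map)
    fix p q assume "adj G p q"
    then have pq: "{p,q} \<in> G"
      unfolding adj_def .
    show "(adj (G - {{x,y}}))\<^sup>*\<^sup>* (\<phi> p) (\<phi> q)"
    proof (cases "{p,q} = {x,y}")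
      case True
      then have "\<phi> p = y" "\<phi> q = y"
        unfolding \<phi>_def using f(2) by (auto simp: doubleton_eq_iff)
      then show ?thesis
        by simp
    next
      case False
      then have "\<phi> p = p" "\<phi> q = q"
        using pendant[OF pq] unfolding \<phi>_def by auto
      moreover have "adj (G - {{x,y}}) p q"
        using pq False unfolding adj_def by simp
      ultimately show ?thesis
        by simp
    qed
  qed
  ultimately show "(adj (G - {{x,y}}))\<^sup>*\<^sup>* a b"
    unfolding \<phi>_def by simp
qed

locale labelled_trivalent_tree =
  fixes V :: "'v set" and E :: "'v set set" and sd :: "'v \<Rightarrow> nat \<Rightarrow> 'v set"
  assumes trivalent: "trivalent_tree V E" and labelling: "side_labelling V E sd"
begin

abbreviation Tri :: "'v set" where
  "Tri \<equiv> trinodes V E"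

lemma finite_V: "finite V"
  using trivalent unfolding trivalent_tree_def is_tree_def by auto

lemma connected: "graph_connected V E"
  using trivalent unfolding trivalent_tree_def is_tree_def by auto

lemma deg_1_or_3: "v \<in> V \<Longrightarrow> deg E v = 1 \<or> deg E v = 3"
  using trivalent unfolding trivalent_tree_def by auto

lemma edgeE:
  assumes "e \<in> E"
  obtains u v where "e = {u,v}" "u \<in> V" "v \<in> V" "u \<noteq> v"
  using assms trivalent by (auto simp: trivalent_tree_def is_tree_def simple_graph_def)

lemma edge_subset_V: "e \<in> E \<Longrightarrow> e \<subseteq> V"
  by (erule edgeE) auto

lemma finite_E: "finite E"
proof (rule finite_subset)
  show "E \<subseteq> Pow V"
    using edge_subset_V by blast
qed (simp add: finite_V)

lemma edge_eq_doubleton: "e \<in> E \<Longrightarrow> x \<in> e \<Longrightarrow> y \<in> e \<Longrightarrow> x \<noteq> y \<Longrightarrow> e = {x,y}"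
  by (erule edgeE) auto

lemma edge_ne: "{x,y} \<in> E \<Longrightarrow> x \<noteq> y"
  by (erule edgeE) (auto simp: doubleton_eq_iff)

lemma Union_E: "\<Union>E = V"
proof
  show "V \<subseteq> \<Union>E"
  proof
    fix v assume "v \<in> V"
    then have "card {e \<in> E. v \<in> e} \<noteq> 0"
      using deg_1_or_3 unfolding deg_def by force
    then have "{e \<in> E. v \<in> e} \<noteq> {}"
      by force
    then show "v \<in> \<Union>E"
      by blast
  qed
qed (use edge_subset_V in blast)

lemma finite_Tri: "finite Tri"
  using finite_V unfolding trinodes_def by auto

lemma non_trinode_leaf: "x \<in> V \<Longrightarrow> x \<notin> Tri \<Longrightarrow> x \<in> leaves V E"
  using deg_1_or_3 unfolding trinodes_def leaves_def by auto

lemma leaf_edge_unique: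
  assumes "x \<in> V" "x \<notin> Tri" "e \<in> E" "e' \<in> E" "x \<in> e" "x \<in> e'"
  shows "e = e'"
proof -
  have "card {e \<in> E. x \<in> e} = 1"
    using non_trinode_leaf[OF assms(1,2)] unfolding leaves_def deg_def by simp
  then obtain a where a: "{e \<in> E. x \<in> e} = {a}"
    by (rule card_1_singletonE)
  have "e \<in> {e \<in> E. x \<in> e}" "e' \<in> {e \<in> E. x \<in> e}"
    using assms(3-6) by simp_all
  then show ?thesis
    unfolding a by simp
qed

lemma side_bij: "v \<in> Tri \<Longrightarrow> bij_betw (sd v) {1,2,3} {e \<in> E. v \<in> e}"
  using labelling unfolding side_labelling_def by blast

lemma side_edge: "v \<in> Tri \<Longrightarrow> j \<in> {1,2,3} \<Longrightarrow> sd v j \<in> E \<and> v \<in> sd v j"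
  using bij_betwE[OF side_bij[of v]] by blast

lemma side_surj:
  assumes "v \<in> Tri" "e \<in> E" "v \<in> e"
  shows "\<exists>j\<in>{1,2,3}. sd v j = e"
proof -
  have "e \<in> sd v ` {1,2,3}"
    using side_bij[OF assms(1)] assms(2,3) unfolding bij_betw_def by simp
  then show ?thesis
    by blast
qed

lemma side_inj: "v \<in> Tri \<Longrightarrow> j \<in> {1,2,3} \<Longrightarrow> j' \<in> {1,2,3} \<Longrightarrow> sd v j = sd v j' \<Longrightarrow> j = j'"
  using inj_onD[OF bij_betw_imp_inj_on[OF side_bij]] by blast

lemma no_bypass:
  assumes "{a,b} \<in> E" "(adj (E - {{a,b}}))\<^sup>*\<^sup>* a b"
  shows False
proof -
  have "(adj (E - {{a,b}}))\<^sup>*\<^sup>* x y" if "adj E x y" for x y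
  proof (cases "{x,y} = {a,b}")
    case True
    then show ?thesis
      using assms(2) adj_rtranclp_sym by (auto simp: doubleton_eq_iff)
  next
    case False
    then show ?thesis
      using that by (intro r_into_rtranclp) (simp add: adj_def)
  qed
  then have "(adj (E - {{a,b}}))\<^sup>*\<^sup>* u v" if "u \<in> V" "v \<in> V" for u v
    using connected that unfolding graph_connected_def by (blast intro: rtranclp_lift)
  then have "graph_connected V (E - {{a,b}})"
    unfolding graph_connected_def by blast
  then show False
    using assms(1) trivalent unfolding trivalent_tree_def is_tree_def by blast
qed

lemma finite_reachable:
  assumes "G \<subseteq> E"
  shows "finite {z. (adj G)\<^sup>*\<^sup>* a z}"
proof -
  have "z \<in> insert a V" if "(adj G)\<^sup>*\<^sup>* a z" for z
    using that by (rule rtranclp_closed) (use assms edge_subset_V in \<open>auto simp: adj_def\<close>)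
  then have "{z. (adj G)\<^sup>*\<^sup>* a z} \<subseteq> insert a V"
    by blast
  then show ?thesis
    using finite_V finite_subset by blast
qed

lemma edge_has_trinode:
  assumes "3 \<le> card (leaves V E)" "e \<in> E"
  shows "\<exists>v\<in>e. v \<in> Tri"
proof (rule ccontr)
  assume nt: "\<not> (\<exists>v\<in>e. v \<in> Tri)"
  obtain x y where xy: "e = {x,y}" "x \<in> V" "y \<in> V" "x \<noteq> y"
    using edgeE[OF assms(2)] by blast
  have only_edge: "g = {x,y}" if "g \<in> E" "z \<in> g" "z \<in> {x,y}" for g z
  proof -
    have "z \<in> V" "z \<notin> Tri" "z \<in> e"
      using that(3) nt xy by auto
    then show ?thesis
      using leaf_edge_unique[OF _ _ that(1) assms(2) that(2)] xy(1) by blast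
  qed
  have "graph_connected (\<Union>E) E"
    using connected Union_E by simp
  then have "\<Union>E \<subseteq> {x,y}"
    by (rule connected_isolated_edge) (use assms(2) xy(1) only_edge in blast)+
  then have "card (leaves V E) \<le> card {x,y}"
    using Union_E unfolding leaves_def by (intro card_mono) auto
  also have "\<dots> \<le> 2"
    by (simp add: card_insert_if)
  finally show False
    using assms(1) by simp
qed

section \<open>Elements of Q and their supports\<close>

lemma inQ_off_Tri: "inQ V E sd w \<Longrightarrow> v \<notin> Tri \<Longrightarrow> w v = (\<lambda>k. 0)"
  unfolding inQ_def by auto

lemma inQ_bz: "inQ V E sd w \<Longrightarrow> v \<in> Tri \<Longrightarrow> is_bz (w v)"
  unfolding inQ_def by blast

lemma inQ_glue:
  "inQ V E sd w \<Longrightarrow> v \<in> Tri \<Longrightarrow> v' \<in> Tri \<Longrightarrow> v \<noteq> v' \<Longrightarrow> j \<in> {1,2,3} \<Longrightarrow> j' \<in> {1,2,3}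
   \<Longrightarrow> sd v j = sd v' j' \<Longrightarrow> side_weight (w v) j = prod.swap (side_weight (w v') j')"
  unfolding inQ_def by blast

lemma inQ_glue_nonzero:
  "inQ V E sd w \<Longrightarrow> v \<in> Tri \<Longrightarrow> v' \<in> Tri \<Longrightarrow> v \<noteq> v' \<Longrightarrow> j \<in> {1,2,3} \<Longrightarrow> j' \<in> {1,2,3}
   \<Longrightarrow> sd v j = sd v' j' \<Longrightarrow> side_weight (w v) j \<noteq> (0,0) \<Longrightarrow> side_weight (w v') j' \<noteq> (0,0)"
  using inQ_glue by (metis swap_simp)

lemma inQ_nonzero_side:
  "inQ V E sd w \<Longrightarrow> v \<in> Tri \<Longrightarrow> w v \<noteq> (\<lambda>k. 0) \<Longrightarrow> \<exists>j\<in>{1,2,3}. side_weight (w v) j \<noteq> (0,0)"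
  using bz_eq_zeroI inQ_bz by blast

lemma nonzeroQ_obtain:
  assumes "w \<noteq> zeroQ"
  obtains v where "w v \<noteq> (\<lambda>k. 0)"
  using assms unfolding zeroQ_def by fastforce

lemma supp_subset: "supp V E sd w \<subseteq> E"
  unfolding supp_def by blast

lemma side_in_supp_iff:
  assumes Q: "inQ V E sd w" and v: "v \<in> Tri" and j: "j \<in> {1,2,3}"
  shows "sd v j \<in> supp V E sd w \<longleftrightarrow> side_weight (w v) j \<noteq> (0,0)"
proof
  assume "sd v j \<in> supp V E sd w"
  then obtain u i where u: "u \<in> Tri" "i \<in> {1,2,3}" "sd u i = sd v j" "side_weight (w u) i \<noteq> (0,0)"
    unfolding supp_def by blast
  show "side_weight (w v) j \<noteq> (0,0)"
  proof (cases "u = v")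
    case True
    then show ?thesis
      using u side_inj[OF v] j by metis
  next
    case False
    then show ?thesis
      using inQ_glue_nonzero[OF Q u(1) v False u(2) j] u(3,4) by blast
  qed
next
  assume "side_weight (w v) j \<noteq> (0,0)"
  then show "sd v j \<in> supp V E sd w"
    unfolding supp_def using side_edge[OF v j] v j by blast
qed

lemma supp_at_Tri:
  assumes "inQ V E sd w" "v \<in> Tri" "e \<in> supp V E sd w" "v \<in> e"
  obtains j where "j \<in> {1,2,3}" "sd v j = e" "side_weight (w v) j \<noteq> (0,0)"
  using side_surj[OF assms(2) _ assms(4)] side_in_supp_iff[OF assms(1,2)] assms(3) supp_subset
  by blast

lemma nonzero_Tri_in_supp:
  assumes "inQ V E sd w" "v \<in> Tri" "w v \<noteq> (\<lambda>k. 0)"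
  shows "v \<in> \<Union>(supp V E sd w)"
proof -
  obtain j where "j \<in> {1,2,3}" "side_weight (w v) j \<noteq> (0,0)"
    using inQ_nonzero_side[OF assms] by blast
  then show ?thesis
    using side_in_supp_iff[OF assms(1,2)] side_edge[OF assms(2)] by blast
qed

lemma deg_eq_card_sides:
  assumes v: "v \<in> Tri" and F: "F \<subseteq> E"
  shows "deg F v = card {j \<in> {1,2,3}. sd v j \<in> F}"
proof -
  have "{e \<in> F. v \<in> e} = sd v ` {j \<in> {1,2,3}. sd v j \<in> F}"
    using side_surj[OF v] side_edge[OF v] F by blast
  moreover have "inj_on (sd v) {j \<in> {1,2,3}. sd v j \<in> F}"
    using bij_betw_imp_inj_on[OF side_bij[OF v]] by (rule inj_on_subset) blast
  ultimately show ?thesis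
    unfolding deg_def by (simp add: card_image)
qed

text \<open>A path in F that enters a leaf of the tree leaves it through the same edge, back to the
  trinode it came from.\<close>
lemma connected_propagate:
  assumes F: "F \<subseteq> E" "graph_connected (\<Union>F) F" and v0: "v0 \<in> Tri" "v0 \<in> \<Union>F" "P v0"
    and step: "\<And>v v'. v \<in> Tri \<Longrightarrow> v' \<in> Tri \<Longrightarrow> {v,v'} \<in> F \<Longrightarrow> v \<noteq> v' \<Longrightarrow> P v \<Longrightarrow> P v'"
    and v: "v \<in> Tri" "v \<in> \<Union>F"
  shows "P v"
proof -
  define U where "U = {x. (x \<in> Tri \<and> P x) \<or> (x \<notin> Tri \<and> (\<exists>z. {x,z} \<in> F \<and> z \<in> Tri \<and> P z))}"
  have "(adj F)\<^sup>*\<^sup>* v0 v"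
    using F(2) v0(2) v(2) unfolding graph_connected_def by blast
  then have "v \<in> U"
  proof (rule rtranclp_closed)
    show "v0 \<in> U"
      unfolding U_def using v0 by blast
  next
    fix y z assume y: "y \<in> U" and "adj F y z"
    then have yz: "{y,z} \<in> F" "{y,z} \<in> E"
      using F(1) unfolding adj_def by auto
    have ne: "y \<noteq> z"
      using edge_ne[OF yz(2)] .
    show "z \<in> U"
    proof (cases "y \<in> Tri")
      case True
      then show ?thesis
        using y step[OF True _ yz(1) ne] yz(1) unfolding U_def by (auto simp: insert_commute)
    next
      case False
      then obtain z0 where z0: "{y,z0} \<in> F" "z0 \<in> Tri" "P z0"
        using y unfolding U_def by blast
      have "{y,z} = {y,z0}"
        using leaf_edge_unique[OF _ False yz(2)] z0(1) F(1) edge_subset_V[OF yz(2)] by blast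
      then show ?thesis
        using z0 ne unfolding U_def by (auto simp: doubleton_eq_iff)
    qed
  qed
  then show ?thesis
    unfolding U_def using v(1) by blast
qed

lemma supp_proper_subtree:
  assumes Q: "inQ V E sd w" and nz: "w \<noteq> zeroQ"
    and conn: "graph_connected (\<Union>(supp V E sd w)) (supp V E sd w)"
  shows "proper_subtree V E (supp V E sd w)"
  unfolding proper_subtree_def
proof (intro conjI ballI impI)
  obtain v where v: "w v \<noteq> (\<lambda>k. 0)"
    using nz by (rule nonzeroQ_obtain)
  then show "supp V E sd w \<noteq> {}"
    using nonzero_Tri_in_supp[OF Q] inQ_off_Tri[OF Q] by blast
next
  fix x assume x: "x \<in> \<Union>(supp V E sd w)" and d: "deg (supp V E sd w) x = 1"
  show "x \<in> leaves V E"
  proof (cases "x \<in> Tri")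
    case True
    have "{j \<in> {1,2,3}. sd x j \<in> supp V E sd w} = {j \<in> {1,2,3}. side_weight (w x) j \<noteq> (0,0)}"
      using side_in_supp_iff[OF Q True] by blast
    then show ?thesis
      using d deg_eq_card_sides[OF True supp_subset] card_nonzero_sides_ne_1[OF inQ_bz[OF Q True]]
      by simp
  next
    case False
    then show ?thesis
      using non_trinode_leaf x supp_subset edge_subset_V by blast
  qed
qed (use supp_subset conn in auto)

end

section \<open>Gluing atoms along the tree\<close>

lemma swap_eq_swap_iff: "x = prod.swap y \<longleftrightarrow> y = prod.swap x"
  by auto

text \<open>The predicate allowed is used twice: for the atoms below a given element of Q, and for the
  atoms whose nonzero sides are exactly the edges of a given proper subtree.\<close>
locale atom_gluing = labelled_trivalent_tree V E sd
  for V :: "'v set" and E :: "'v set set" and sd :: "'v \<Rightarrow> nat \<Rightarrow> 'v set" +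
  fixes allowed :: "'v \<Rightarrow> (nat \<Rightarrow> nat) \<Rightarrow> bool" and v0 :: 'v and s0 :: "nat \<Rightarrow> nat"
  assumes allowed_atom: "allowed v s \<Longrightarrow> s \<in> atoms"
    and allowed_extend: "v \<in> trinodes V E \<Longrightarrow> v' \<in> trinodes V E \<Longrightarrow> v \<noteq> v' \<Longrightarrow> allowed v s \<Longrightarrow> j \<in> {1,2,3}
      \<Longrightarrow> j' \<in> {1,2,3} \<Longrightarrow> sd v j = sd v' j' \<Longrightarrow> side_weight s j \<noteq> (0,0)
      \<Longrightarrow> \<exists>s'. allowed v' s' \<and> side_weight s' j' = prod.swap (side_weight s j)"
    and root: "v0 \<in> trinodes V E" and root_allowed: "allowed v0 s0"
begin

definition active :: "('v \<Rightarrow> nat \<Rightarrow> nat) \<Rightarrow> 'v set" where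
  "active g = {v \<in> Tri. g v \<noteq> (\<lambda>k. 0)}"

definition linked :: "('v \<Rightarrow> nat \<Rightarrow> nat) \<Rightarrow> 'v \<Rightarrow> 'v \<Rightarrow> bool" where
  "linked g x y \<longleftrightarrow> x \<in> active g \<and> y \<in> active g \<and> x \<noteq> y \<and>
     (\<exists>j\<in>{1,2,3}. sd x j = {x,y} \<and> side_weight (g x) j \<noteq> (0,0))"

definition compatible :: "('v \<Rightarrow> nat \<Rightarrow> nat) \<Rightarrow> bool" where
  "compatible g \<longleftrightarrow> (\<forall>v\<in>active g. \<forall>v'\<in>active g. \<forall>j\<in>{1,2,3}. \<forall>j'\<in>{1,2,3}.
     v \<noteq> v' \<longrightarrow> sd v j = sd v' j' \<longrightarrow> side_weight (g v) j = prod.swap (side_weight (g v') j'))"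

text \<open>A partial gluing places allowed atoms on a set of trinodes that is reached from v0
  through nonzero sides, matching wherever two of them meet; it lies in Q once no nonzero side
  points to an empty trinode.\<close>
definition partial_gluing :: "('v \<Rightarrow> nat \<Rightarrow> nat) \<Rightarrow> bool" where
  "partial_gluing g \<longleftrightarrow> (\<forall>v. v \<notin> Tri \<longrightarrow> g v = (\<lambda>k. 0)) \<and> (\<forall>v\<in>active g. allowed v (g v))
     \<and> g v0 = s0 \<and> compatible g \<and> (\<forall>v\<in>active g. (linked g)\<^sup>*\<^sup>* v0 v)"

lemma compatibleD:
  "compatible g \<Longrightarrow> v \<in> active g \<Longrightarrow> v' \<in> active g \<Longrightarrow> j \<in> {1,2,3} \<Longrightarrow> j' \<in> {1,2,3} \<Longrightarrow> v \<noteq> v'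
   \<Longrightarrow> sd v j = sd v' j' \<Longrightarrow> side_weight (g v) j = prod.swap (side_weight (g v') j')"
  unfolding compatible_def by blast

lemma partial_gluing_root: "partial_gluing (\<lambda>v. if v = v0 then s0 else (\<lambda>k. 0))"
proof -
  have "active (\<lambda>v. if v = v0 then s0 else (\<lambda>k. 0)) = {v0}"
    using root atom_nonzero[OF allowed_atom[OF root_allowed]] unfolding active_def by auto
  then show ?thesis
    using root root_allowed unfolding partial_gluing_def compatible_def by auto
qed

lemma root_active: "partial_gluing g \<Longrightarrow> v0 \<in> active g"
  using root atom_nonzero[OF allowed_atom[OF root_allowed]] unfolding partial_gluing_def active_def by simp

lemma linked_edge: "linked g x y \<Longrightarrow> {x,y} \<in> E \<and> x \<in> Tri \<and> y \<in> Tri"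
  unfolding linked_def active_def by (metis (no_types, lifting) mem_Collect_eq side_edge)

lemma linked_sym:
  assumes "partial_gluing g" "linked g x y"
  shows "linked g y x"
proof -
  obtain j where j: "j \<in> {1,2,3}" "sd x j = {x,y}" "side_weight (g x) j \<noteq> (0,0)"
    and act: "x \<in> active g" "y \<in> active g" "x \<noteq> y"
    using assms(2) unfolding linked_def by blast
  have xy: "x \<in> Tri" "y \<in> Tri" "{x,y} \<in> E"
    using linked_edge[OF assms(2)] by auto
  obtain j' where j': "j' \<in> {1,2,3}" "sd y j' = {x,y}"
    using side_surj[OF xy(2,3)] by blast
  have "side_weight (g x) j = prod.swap (side_weight (g y) j')"
    using compatibleD[of g x y j j'] assms(1) act j j' unfolding partial_gluing_def by simp
  then have "side_weight (g y) j' \<noteq> (0,0)"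
    using j(3) by (metis swap_simp)
  then show ?thesis
    using act j' unfolding linked_def by (auto simp: insert_commute)
qed

lemma linked_connected:
  assumes "partial_gluing g" "x \<in> active g" "y \<in> active g"
  shows "(linked g)\<^sup>*\<^sup>* x y"
proof -
  have "(linked g)\<^sup>*\<^sup>* v0 x" "(linked g)\<^sup>*\<^sup>* v0 y"
    using assms unfolding partial_gluing_def by blast+
  moreover have "symp (linked g)"
    using linked_sym[OF assms(1)] by (rule sympI)
  ultimately show ?thesis
    by (meson rtranclp_trans symp_rtranclp sympD)
qed

text \<open>An empty trinode next to the active region touches it in only one edge, since otherwise
  the tree would contain a cycle through it.\<close>
lemma empty_neighbour_unique:
  assumes g: "partial_gluing g" and v: "v \<in> active g" and u: "u \<in> active g" "u \<noteq> v"
    and v': "v' \<in> Tri" "v' \<notin> active g" "{v,v'} \<in> E"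
  shows "{v',u} \<notin> E"
proof
  assume vu: "{v',u} \<in> E"
  have "(adj (E - {{v',u}}))\<^sup>*\<^sup>* v u"
    using linked_connected[OF g v u(1)]
  proof (rule rtranclp_lift)
    fix x y assume xy: "linked g x y"
    then have "{x,y} \<in> E"
      using linked_edge by blast
    moreover have "{x,y} \<noteq> {v',u}"
      using xy v'(2) unfolding linked_def by (auto simp: doubleton_eq_iff)
    ultimately show "(adj (E - {{v',u}}))\<^sup>*\<^sup>* x y"
      by (intro r_into_rtranclp) (simp add: adj_def)
  qed
  moreover have "adj (E - {{v',u}}) v' v"
    using v'(3) u(2) edge_ne[OF v'(3)] unfolding adj_def by (auto simp: insert_commute doubleton_eq_iff)
  ultimately have "(adj (E - {{v',u}}))\<^sup>*\<^sup>* v' u"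
    by (rule converse_rtranclp_into_rtranclp[rotated])
  then show False
    using no_bypass vu by blast
qed

lemma empty_neighbour_sides:
  assumes g: "partial_gluing g" and v: "v \<in> active g" and v': "v' \<in> Tri" "v' \<notin> active g"
    and j: "j \<in> {1,2,3}" "j' \<in> {1,2,3}" "sd v j = sd v' j'"
    and u: "u \<in> active g" "i \<in> {1,2,3}" "i' \<in> {1,2,3}" "sd v' i = sd u i'"
  shows "u = v \<and> i = j' \<and> i' = j"
proof -
  have vT: "v \<in> Tri" "v \<noteq> v'" and uT: "u \<in> Tri" "u \<noteq> v'"
    using v u(1) v' unfolding active_def by auto
  have vv': "sd v j = {v,v'}"
    using edge_eq_doubleton[of "sd v j" v v'] side_edge[OF vT(1) j(1)] side_edge[OF v'(1) j(2)] j(3) vT(2)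
    by simp
  have uv': "sd v' i = {v',u}"
    using edge_eq_doubleton[of "sd v' i" v' u] side_edge[OF v'(1) u(2)] side_edge[OF uT(1) u(3)] u(4) uT(2)
    by simp
  then have "u = v"
    using empty_neighbour_unique[OF g v u(1) _ v'] vv' side_edge[OF vT(1) j(1)] side_edge[OF v'(1) u(2)]
    by auto
  then have "sd v i' = sd v j" "sd v' i = sd v' j'"
    using vv' uv' u(4) j(3) by (simp_all add: insert_commute)
  then show ?thesis
    using side_inj[OF vT(1) u(3) j(1)] side_inj[OF v'(1) u(2) j(2)] \<open>u = v\<close> by simp
qed

lemma compatible_update:
  assumes g: "compatible g" and v': "v' \<notin> active g"
    and new: "\<And>u i i'. u \<in> active g \<Longrightarrow> i \<in> {1,2,3} \<Longrightarrow> i' \<in> {1,2,3} \<Longrightarrow> sd v' i = sd u i'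
      \<Longrightarrow> side_weight s' i = prod.swap (side_weight (g u) i')"
  shows "compatible (g(v' := s'))"
  unfolding compatible_def
proof (intro ballI impI)
  fix a b ia ib assume a: "a \<in> active (g(v' := s'))" and b: "b \<in> active (g(v' := s'))"
    and i: "ia \<in> {1,2,3}" "ib \<in> {1,2,3}" and nab: "a \<noteq> b" and sdab: "sd a ia = sd b ib"
  have old: "u \<in> active g" "(g(v' := s')) u = g u" if "u \<in> active (g(v' := s'))" "u \<noteq> v'" for u
    using that unfolding active_def by auto
  consider "a = v'" | "b = v'" | "a \<noteq> v'" "b \<noteq> v'"
    by blast
  then show "side_weight ((g(v' := s')) a) ia = prod.swap (side_weight ((g(v' := s')) b) ib)"
  proof cases
    case 1
    then show ?thesis
      using new[of b ia ib] old[OF b] nab sdab i by simp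
  next
    case 2
    then have "side_weight s' ib = prod.swap (side_weight (g a) ia)"
      using new[of a ib ia] old[OF a] nab sdab i by simp
    then show ?thesis
      using 2 old[OF a] nab swap_eq_swap_iff by (metis fun_upd_same)
  next
    case 3
    then show ?thesis
      using compatibleD[OF g _ _ i nab sdab] old a b by simp
  qed
qed

lemma linked_update:
  assumes "linked g a b" "v' \<notin> active g"
  shows "linked (g(v' := s')) a b"
  using assms unfolding linked_def active_def by auto

lemma partial_gluing_extend:
  assumes g: "partial_gluing g" and v: "v \<in> active g" and v': "v' \<in> Tri" "v' \<notin> active g"
    and j: "j \<in> {1,2,3}" "j' \<in> {1,2,3}" "sd v j = sd v' j'" and nz: "side_weight (g v) j \<noteq> (0,0)"
  shows "\<exists>g'. partial_gluing g' \<and> active g' = insert v' (active g)"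
proof -
  have vT: "v \<in> Tri" and nev: "v \<noteq> v'"
    using v v' unfolding active_def by auto
  have g_parts: "\<forall>u. u \<notin> Tri \<longrightarrow> g u = (\<lambda>k. 0)" "\<forall>u\<in>active g. allowed u (g u)" "g v0 = s0"
      "compatible g" "\<forall>u\<in>active g. (linked g)\<^sup>*\<^sup>* v0 u"
    using g unfolding partial_gluing_def by auto
  obtain s' where s': "allowed v' s'" "side_weight s' j' = prod.swap (side_weight (g v) j)"
    using allowed_extend[OF vT v'(1) nev _ j nz] v g_parts(2) by blast
  define g' where "g' = g(v' := s')"
  have act': "active g' = insert v' (active g)"
    using atom_nonzero[OF allowed_atom[OF s'(1)]] v' unfolding g'_def active_def by auto
  have old: "g' u = g u" if "u \<in> active g" for u
    using that v'(2) unfolding g'_def by auto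
  have "compatible g'"
    unfolding g'_def
  proof (rule compatible_update[OF g_parts(4) v'(2)])
    fix u i i' assume "u \<in> active g" "i \<in> {1,2,3}" "i' \<in> {1,2,3}" "sd v' i = sd u i'"
    then show "side_weight s' i = prod.swap (side_weight (g u) i')"
      using empty_neighbour_sides[OF g v v' j] s'(2) by blast
  qed
  moreover have "(linked g')\<^sup>*\<^sup>* v0 x" if "x \<in> active g'" for x
  proof -
    have lift: "(linked g')\<^sup>*\<^sup>* v0 y" if "y \<in> active g" for y
    proof -
      have "(linked g)\<^sup>*\<^sup>* v0 y"
        using g_parts(5) that by blast
      then show ?thesis
        unfolding g'_def by (rule rtranclp_lift) (rule r_into_rtranclp, erule linked_update[OF _ v'(2)])
    qed
    have "sd v j = {v,v'}"
      using edge_eq_doubleton[of "sd v j" v v'] side_edge[OF vT j(1)] side_edge[OF v'(1) j(2)] j(3) nev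
      by simp
    then have "linked g' v v'"
      using old[OF v] j(1) nz nev act' v unfolding linked_def by auto
    then show ?thesis
      using that act' lift[OF v] lift by auto
  qed
  ultimately have "partial_gluing g'"
    using g_parts(1-3) v'(1) s'(1) old root_active[OF g] v'(2) act'
    unfolding partial_gluing_def g'_def by (auto split: if_splits)
  then show ?thesis
    using act' by blast
qed

lemma maximal_partial_gluing_exists:
  obtains g where "partial_gluing g" "\<And>g'. partial_gluing g' \<Longrightarrow> card (active g') \<le> card (active g)"
proof -
  have "card (active g) < Suc (card Tri)" for g
    using card_mono[OF finite_Tri, of "active g"] unfolding active_def by auto
  then have "\<exists>g. partial_gluing g \<and> (\<forall>g'. partial_gluing g' \<longrightarrow> card (active g') \<le> card (active g))"
    using ex_has_greatest_nat[where P = partial_gluing and f = "\<lambda>g. card (active g)", OF partial_gluing_root]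
    by blast
  then show ?thesis
    using that by blast
qed

lemma maximal_partial_gluing_closed:
  assumes g: "partial_gluing g" and max: "\<And>g'. partial_gluing g' \<Longrightarrow> card (active g') \<le> card (active g)"
    and v: "v \<in> active g" and v': "v' \<in> Tri" "v \<noteq> v'"
    and j: "j \<in> {1,2,3}" "j' \<in> {1,2,3}" "sd v j = sd v' j'" and nz: "side_weight (g v) j \<noteq> (0,0)"
  shows "v' \<in> active g"
proof (rule ccontr)
  assume "v' \<notin> active g"
  then obtain g' where g': "partial_gluing g'" "active g' = insert v' (active g)"
    using partial_gluing_extend[OF g v v'(1) _ j nz] by blast
  have "finite (active g)"
    using finite_Tri unfolding active_def by simp
  then have "card (active g') = Suc (card (active g))"
    using g'(2) \<open>v' \<notin> active g\<close> by simp
  then show False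
    using max[OF g'(1)] by simp
qed

lemma maximal_partial_gluing_inQ:
  assumes g: "partial_gluing g" and max: "\<And>g'. partial_gluing g' \<Longrightarrow> card (active g') \<le> card (active g)"
  shows "inQ V E sd g"
  unfolding inQ_def
proof (intro conjI allI impI ballI)
  fix v k assume "v \<notin> Tri"
  then show "g v k = 0"
    using g unfolding partial_gluing_def by simp
next
  fix v assume "v \<in> Tri"
  then show "is_bz (g v)"
    using g atom_is_bz[OF allowed_atom] unfolding partial_gluing_def active_def
    by (cases "g v = (\<lambda>k. 0)") (auto simp: is_bz_def)
next
  fix v v' j j' assume vT: "v \<in> Tri" and v'T: "v' \<in> Tri" and j: "j \<in> {1,2,3}" "j' \<in> {1,2,3}"
    and ne: "v \<noteq> v'" and sdj: "sd v j = sd v' j'"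
  have zero_side: "side_weight (g u) i = (0,0)" if "u \<in> Tri" "u \<notin> active g" for u i
    using that unfolding active_def by (simp add: side_weight_def)
  have closed: "side_weight (g u) i = (0,0)"
    if "u \<in> active g" "u' \<in> Tri" "u' \<notin> active g" "u \<noteq> u'" "i \<in> {1,2,3}" "i' \<in> {1,2,3}"
      "sd u i = sd u' i'" for u u' i i'
    using maximal_partial_gluing_closed[OF g max] that by blast
  show "side_weight (g v) j = prod.swap (side_weight (g v') j')"
  proof (cases "v \<in> active g"; cases "v' \<in> active g")
    assume "v \<in> active g" "v' \<in> active g"
    then show ?thesis
      using compatibleD[of g v v' j j'] g ne sdj j unfolding partial_gluing_def by blast
  next
    assume "v \<in> active g" "v' \<notin> active g"
    then show ?thesis
      using closed[of v v' j j'] zero_side[OF v'T] v'T ne j sdj by simp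
  next
    assume "v \<notin> active g" "v' \<in> active g"
    then show ?thesis
      using closed[of v' v j' j] zero_side[OF vT] vT ne j sdj by simp
  next
    assume "v \<notin> active g" "v' \<notin> active g"
    then show ?thesis
      using zero_side vT v'T by simp
  qed
qed

lemma linked_adj_supp:
  assumes "linked g a b"
  shows "adj (supp V E sd g) a b"
proof -
  obtain j where "j \<in> {1,2,3}" "sd a j = {a,b}" "side_weight (g a) j \<noteq> (0,0)"
    using assms unfolding linked_def by blast
  then show ?thesis
    using linked_edge[OF assms] unfolding supp_def adj_def by blast
qed

lemma partial_gluing_supp_connected:
  assumes g: "partial_gluing g"
  shows "graph_connected (\<Union>(supp V E sd g)) (supp V E sd g)"
proof (rule graph_connectedI_from, intro ballI)
  fix x assume "x \<in> \<Union>(supp V E sd g)"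
  then obtain v j where vj: "v \<in> Tri" "j \<in> {1,2,3}" "x \<in> sd v j" "side_weight (g v) j \<noteq> (0,0)"
    "sd v j \<in> supp V E sd g"
    unfolding supp_def by blast
  then have "v \<in> active g"
    unfolding active_def by (auto simp: side_weight_def)
  then have "(linked g)\<^sup>*\<^sup>* v0 v"
    using g unfolding partial_gluing_def by blast
  then have path: "(adj (supp V E sd g))\<^sup>*\<^sup>* v0 v"
    by (rule rtranclp_lift) (rule r_into_rtranclp, erule linked_adj_supp)
  show "(adj (supp V E sd g))\<^sup>*\<^sup>* v0 x"
  proof (cases "x = v")
    case False
    then have "sd v j = {v,x}"
      using edge_eq_doubleton[of "sd v j" v x] side_edge[OF vj(1,2)] vj(3) by simp
    then have "adj (supp V E sd g) v x"
      using vj(5) unfolding adj_def by simp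
    then show ?thesis
      using path by simp
  qed (use path in simp)
qed

theorem atom_gluing_exists:
  obtains g where "inQ V E sd g" "g v0 = s0" "\<forall>v\<in>Tri. g v = (\<lambda>k. 0) \<or> allowed v (g v)"
    "graph_connected (\<Union>(supp V E sd g)) (supp V E sd g)"
proof -
  obtain g where g: "partial_gluing g" and max: "\<And>g'. partial_gluing g' \<Longrightarrow> card (active g') \<le> card (active g)"
    using maximal_partial_gluing_exists by blast
  have "g v0 = s0" "\<forall>v\<in>active g. allowed v (g v)"
    using g unfolding partial_gluing_def by blast+
  then have "g v0 = s0" "\<forall>v\<in>Tri. g v = (\<lambda>k. 0) \<or> allowed v (g v)"
    unfolding active_def by blast+
  then show ?thesis
    using that maximal_partial_gluing_inQ[OF g max] partial_gluing_supp_connected[OF g] by blast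
qed

end

section \<open>Minimal generators\<close>

context labelled_trivalent_tree
begin

lemma inQ_diff:
  assumes g: "inQ V E sd g" and w: "inQ V E sd w" and le: "\<And>v k. g v k \<le> w v k"
  shows "inQ V E sd (\<lambda>v k. w v k - g v k)"
  unfolding inQ_def
proof (intro conjI allI impI ballI)
  fix v k assume "v \<notin> Tri"
  then show "w v k - g v k = 0"
    using inQ_off_Tri[OF w] by simp
next
  fix v assume "v \<in> Tri"
  then show "is_bz (\<lambda>k. w v k - g v k)"
    using bz_diff[OF inQ_bz[OF g] inQ_bz[OF w]] le by simp
next
  fix v v' j j' assume "v \<in> Tri" "v' \<in> Tri" "j \<in> {1,2,3}" "j' \<in> {1,2,3}" "v \<noteq> v'" "sd v j = sd v' j'"
  then have "side_weight (w v) j = prod.swap (side_weight (w v') j')"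
    "side_weight (g v) j = prod.swap (side_weight (g v') j')"
    using inQ_glue[OF w] inQ_glue[OF g] by blast+
  then show "side_weight (\<lambda>k. w v k - g v k) j = prod.swap (side_weight (\<lambda>k. w v' k - g v' k) j')"
    using side_weight_diff[of "g v" "w v" j] side_weight_diff[of "g v'" "w v'" j'] le
    by (cases "side_weight (w v') j'", cases "side_weight (g v') j'") auto
qed

text \<open>These turn out to be exactly the minimal generators.\<close>
definition connected_atomic :: "('v \<Rightarrow> nat \<Rightarrow> nat) \<Rightarrow> bool" where
  "connected_atomic w \<longleftrightarrow> inQ V E sd w \<and> w \<noteq> zeroQ \<and> (\<forall>v\<in>Tri. w v = (\<lambda>k. 0) \<or> w v \<in> atoms)
     \<and> graph_connected (\<Union>(supp V E sd w)) (supp V E sd w)"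

text \<open>At each trinode one summand vanishes, since atoms are indecomposable; the matching condition
  spreads the vanishing of u2 along the connected support.\<close>
lemma connected_atomic_indecomposable:
  assumes w: "connected_atomic w" and u: "inQ V E sd u1" "inQ V E sd u2" "u1 \<noteq> zeroQ"
    and sum: "w = addQ u1 u2"
  shows "u2 = zeroQ"
proof -
  have Q: "inQ V E sd w" and atomic: "\<And>v. v \<in> Tri \<Longrightarrow> w v = (\<lambda>k. 0) \<or> w v \<in> atoms"
    and conn: "graph_connected (\<Union>(supp V E sd w)) (supp V E sd w)"
    using w unfolding connected_atomic_def by auto
  have wk: "w v k = u1 v k + u2 v k" for v k
    using sum unfolding addQ_def by simp
  have zero_parts: "u1 v = (\<lambda>k. 0)" "u2 v = (\<lambda>k. 0)" if "w v = (\<lambda>k. 0)" for v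
    using that wk by (metis add_is_0)+
  have one_vanishes: "u1 v = (\<lambda>k. 0) \<or> u2 v = (\<lambda>k. 0)" if "v \<in> Tri" for v
    using atomic[OF that] zero_parts atom_indecomposable inQ_bz[OF u(1) that] inQ_bz[OF u(2) that] wk
    by metis
  obtain v1 where v1: "u1 v1 \<noteq> (\<lambda>k. 0)"
    using u(3) by (rule nonzeroQ_obtain)
  have v1T: "v1 \<in> Tri"
    using v1 inQ_off_Tri[OF u(1)] by blast
  have v1F: "v1 \<in> \<Union>(supp V E sd w)"
    using nonzero_Tri_in_supp[OF Q v1T] v1 zero_parts by blast
  have u2_zero_on_supp: "u2 v = (\<lambda>k. 0)" if "v \<in> Tri" "v \<in> \<Union>(supp V E sd w)" for v
  proof (rule connected_propagate[OF supp_subset conn v1T v1F])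
    show "u2 v1 = (\<lambda>k. 0)"
      using one_vanishes[OF v1T] v1 by blast
  next
    fix a b assume ab: "a \<in> Tri" "b \<in> Tri" "{a,b} \<in> supp V E sd w" "a \<noteq> b" "u2 a = (\<lambda>k. 0)"
    obtain j where j: "j \<in> {1,2,3}" "sd a j = {a,b}" "side_weight (w a) j \<noteq> (0,0)"
      using supp_at_Tri[OF Q ab(1,3)] by blast
    obtain j' where j': "j' \<in> {1,2,3}" "sd b j' = {a,b}"
      using side_surj[OF ab(2)] ab(3) supp_subset by blast
    have "u1 a = w a"
      using ab(5) wk by (simp add: fun_eq_iff)
    then have "side_weight (u1 b) j' \<noteq> (0,0)"
      using inQ_glue_nonzero[OF u(1) ab(1,2,4) j(1) j'(1)] j(2,3) j'(2) by simp
    then have "u1 b \<noteq> (\<lambda>k. 0)"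
      by auto
    then show "u2 b = (\<lambda>k. 0)"
      using one_vanishes[OF ab(2)] by blast
  qed (use that in auto)
  show ?thesis
  proof (rule ext)
    fix v
    consider "v \<notin> Tri" | "v \<in> Tri" "v \<in> \<Union>(supp V E sd w)" | "v \<in> Tri" "w v = (\<lambda>k. 0)"
      using nonzero_Tri_in_supp[OF Q] by blast
    then show "u2 v = zeroQ v"
      unfolding zeroQ_def using inQ_off_Tri[OF u(2)] u2_zero_on_supp zero_parts by cases auto
  qed
qed

lemma connected_atomic_min_gen: "connected_atomic w \<Longrightarrow> min_gen V E sd w"
  using connected_atomic_indecomposable unfolding min_gen_def connected_atomic_def by blast

lemma atom_gluing_below:
  assumes Q: "inQ V E sd w" and v0: "v0 \<in> Tri" and s0: "s0 \<in> atoms" "\<forall>k. s0 k \<le> w v0 k"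
  shows "atom_gluing V E sd (\<lambda>v s. s \<in> atoms \<and> (\<forall>k. s k \<le> w v k)) v0 s0"
proof
  fix v v' s j j'
  assume vv': "v \<in> Tri" "v' \<in> Tri" "v \<noteq> v'" and s: "s \<in> atoms \<and> (\<forall>k. s k \<le> w v k)"
    and j: "j \<in> {1,2,3}" "j' \<in> {1,2,3}" "sd v j = sd v' j'" and nzs: "side_weight s j \<noteq> (0,0)"
  have "side_weight s j \<in> {(0,0), (1,0), (0,1)}"
    using atom_side_weight[OF _ j(1)] s by blast
  then have x: "prod.swap (side_weight s j) \<in> {(1,0), (0,1)}"
    using nzs by auto
  have "side_weight (w v) j = prod.swap (side_weight (w v') j')"
    using inQ_glue[OF Q vv' j] .
  then have "fst (prod.swap (side_weight s j)) \<le> fst (side_weight (w v') j')"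
    "snd (prod.swap (side_weight s j)) \<le> snd (side_weight (w v') j')"
    using side_weight_mono[of s "w v" j] s by (cases "side_weight (w v') j'"; simp)+
  then show "\<exists>s'. (s' \<in> atoms \<and> (\<forall>k. s' k \<le> w v' k)) \<and> side_weight s' j' = prod.swap (side_weight s j)"
    using bz_contains_atom[OF inQ_bz[OF Q vv'(2)] j(2) x] by blast
qed (use v0 s0 in auto)

lemma min_gen_eq_of_le:
  assumes w: "min_gen V E sd w" and g: "inQ V E sd g" "g \<noteq> zeroQ" and le: "\<And>v k. g v k \<le> w v k"
  shows "w = g"
proof -
  have Q: "inQ V E sd w"
    and irr: "\<not> (\<exists>u1 u2. inQ V E sd u1 \<and> inQ V E sd u2 \<and> u1 \<noteq> zeroQ \<and> u2 \<noteq> zeroQ \<and> w = addQ u1 u2)"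
    using w unfolding min_gen_def by auto
  have "w = addQ g (\<lambda>v k. w v k - g v k)"
    unfolding addQ_def using le by (simp add: fun_eq_iff)
  then have "(\<lambda>v k. w v k - g v k) = zeroQ"
    using irr g inQ_diff[OF g(1) Q le] by blast
  then have "w v k - g v k = 0" for v k
    unfolding zeroQ_def by meson
  then have "w v k = g v k" for v k
    using le[of v k] by (meson diff_is_0_eq le_antisym)
  then show ?thesis
    by (simp add: fun_eq_iff)
qed

text \<open>Glue atoms lying below w outwards from one nonzero side of w.\<close>
lemma min_gen_connected_atomic:
  assumes w: "min_gen V E sd w"
  shows "connected_atomic w"
proof -
  have Q: "inQ V E sd w" and nz: "w \<noteq> zeroQ"
    using w unfolding min_gen_def by auto
  obtain v0 where v0: "w v0 \<noteq> (\<lambda>k. 0)"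
    using nz by (rule nonzeroQ_obtain)
  have v0T: "v0 \<in> Tri"
    using v0 inQ_off_Tri[OF Q] by blast
  obtain j0 where j0: "j0 \<in> {1,2,3}" "side_weight (w v0) j0 \<noteq> (0,0)"
    using inQ_nonzero_side[OF Q v0T v0] by blast
  define x0 where "x0 = (if fst (side_weight (w v0) j0) \<noteq> 0 then (1::nat, 0::nat) else (0, 1))"
  have x0: "x0 \<in> {(1,0), (0,1)}" "fst x0 \<le> fst (side_weight (w v0) j0)" "snd x0 \<le> snd (side_weight (w v0) j0)"
    using j0(2) unfolding x0_def by (auto simp: prod_eq_iff)
  obtain s0 where s0: "s0 \<in> atoms" "\<forall>k. s0 k \<le> w v0 k"
    using bz_contains_atom[OF inQ_bz[OF Q v0T] j0(1) x0] by blast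
  interpret below: atom_gluing V E sd "\<lambda>v s. s \<in> atoms \<and> (\<forall>k. s k \<le> w v k)" v0 s0
    by (rule atom_gluing_below[OF Q v0T s0])
  obtain g where g: "inQ V E sd g" "g v0 = s0" "\<forall>v\<in>Tri. g v = (\<lambda>k. 0) \<or> g v \<in> atoms \<and> (\<forall>k. g v k \<le> w v k)"
    "graph_connected (\<Union>(supp V E sd g)) (supp V E sd g)"
    by (rule below.atom_gluing_exists)
  have "g \<noteq> zeroQ"
    using g(2) atom_nonzero[OF s0(1)] unfolding zeroQ_def by auto
  moreover have "g v k \<le> w v k" for v k
    using g(3) inQ_off_Tri[OF g(1)] by (cases "v \<in> Tri") auto
  ultimately have "w = g"
    using min_gen_eq_of_le[OF w g(1)] by blast
  then show ?thesis
    unfolding connected_atomic_def using g(3,4) Q nz by blast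
qed

lemma min_gen_iff_connected_atomic: "min_gen V E sd w \<longleftrightarrow> connected_atomic w"
  using min_gen_connected_atomic connected_atomic_min_gen by blast

lemma proper_subtree_sides_ge_2:
  assumes v: "v \<in> Tri" and F: "proper_subtree V E F" and vF: "v \<in> \<Union>F"
  shows "2 \<le> card {j \<in> {1,2,3}. sd v j \<in> F}"
proof -
  have FE: "F \<subseteq> E"
    using F unfolding proper_subtree_def by blast
  have "finite {e \<in> F. v \<in> e}"
    using finite_E FE by (auto intro: finite_subset)
  moreover have "{e \<in> F. v \<in> e} \<noteq> {}"
    using vF by blast
  ultimately have "deg F v \<noteq> 0"
    unfolding deg_def by simp
  moreover have "deg F v \<noteq> 1"
    using F vF v unfolding proper_subtree_def leaves_def trinodes_def by auto
  ultimately have "2 \<le> deg F v"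
    by linarith
  then show ?thesis
    using deg_eq_card_sides[OF v FE] by simp
qed

definition fitting_atom :: "'v set set \<Rightarrow> 'v \<Rightarrow> (nat \<Rightarrow> nat) \<Rightarrow> bool" where
  "fitting_atom F v s \<longleftrightarrow> s \<in> atoms \<and> v \<in> \<Union>F \<and> (\<forall>j\<in>{1,2,3}. side_weight s j \<noteq> (0,0) \<longleftrightarrow> sd v j \<in> F)"

lemma fitting_atom_exists:
  assumes F: "proper_subtree V E F" and v: "v \<in> Tri" "j \<in> {1,2,3}" "sd v j \<in> F"
    and y: "y \<in> {(1,0), (0,1)}"
  shows "\<exists>s. fitting_atom F v s \<and> side_weight s j = y"
proof -
  have "v \<in> \<Union>F"
    using v(3) side_edge[OF v(1,2)] by blast
  then show ?thesis
    using atom_with_support[of "{j \<in> {1,2,3}. sd v j \<in> F}" j y]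
      proper_subtree_sides_ge_2[OF v(1) F] v y unfolding fitting_atom_def by auto
qed

lemma atom_gluing_fitting:
  assumes F: "proper_subtree V E F" and v0: "v0 \<in> Tri" and s0: "fitting_atom F v0 s0"
  shows "atom_gluing V E sd (fitting_atom F) v0 s0"
proof
  fix v v' s j j'
  assume vv': "v \<in> Tri" "v' \<in> Tri" "v \<noteq> v'" and s: "fitting_atom F v s"
    and j: "j \<in> {1,2,3}" "j' \<in> {1,2,3}" "sd v j = sd v' j'" and nzs: "side_weight s j \<noteq> (0,0)"
  have "side_weight s j \<in> {(0,0), (1,0), (0,1)}"
    using atom_side_weight[OF _ j(1)] s unfolding fitting_atom_def by blast
  then have "prod.swap (side_weight s j) \<in> {(1,0), (0,1)}"
    using nzs by auto
  moreover have "sd v' j' \<in> F"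
    using s j nzs unfolding fitting_atom_def by auto
  ultimately show "\<exists>s'. fitting_atom F v' s' \<and> side_weight s' j' = prod.swap (side_weight s j)"
    using fitting_atom_exists[OF F vv'(2) j(2)] by blast
qed (use v0 s0 fitting_atom_def in auto)

lemma supp_fitting_gluing:
  assumes leaves3: "3 \<le> card (leaves V E)" and F: "proper_subtree V E F"
    and g: "inQ V E sd g" "\<forall>v\<in>Tri. g v = (\<lambda>k. 0) \<or> fitting_atom F v (g v)"
    and v0: "v0 \<in> Tri" "v0 \<in> \<Union>F" "g v0 \<noteq> (\<lambda>k. 0)"
  shows "supp V E sd g = F"
proof -
  have FE: "F \<subseteq> E" and Fc: "graph_connected (\<Union>F) F"
    using F unfolding proper_subtree_def by auto
  have sides: "side_weight (g v) j \<noteq> (0,0) \<longleftrightarrow> sd v j \<in> F"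
    if "v \<in> Tri" "g v \<noteq> (\<lambda>k. 0)" "j \<in> {1,2,3}" for v j
    using g(2) that unfolding fitting_atom_def by blast
  have active_on_F: "g v \<noteq> (\<lambda>k. 0)" if "v \<in> Tri" "v \<in> \<Union>F" for v
  proof (rule connected_propagate[where P = "\<lambda>v. g v \<noteq> (\<lambda>k. 0)", OF FE Fc v0])
    fix a b assume ab: "a \<in> Tri" "b \<in> Tri" "{a,b} \<in> F" "a \<noteq> b" "g a \<noteq> (\<lambda>k. 0)"
    obtain j where j: "j \<in> {1,2,3}" "sd a j = {a,b}"
      using side_surj[OF ab(1)] ab(3) FE by blast
    obtain j' where j': "j' \<in> {1,2,3}" "sd b j' = {a,b}"
      using side_surj[OF ab(2)] ab(3) FE by blast
    have "side_weight (g b) j' \<noteq> (0,0)"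
      using sides[OF ab(1,5) j(1)] inQ_glue_nonzero[OF g(1) ab(1,2,4) j(1) j'(1)] j(2) j'(2) ab(3)
      by simp
    then show "g b \<noteq> (\<lambda>k. 0)"
      by auto
  qed (use that in auto)
  show ?thesis
  proof (intro equalityI subsetI)
    fix e assume "e \<in> supp V E sd g"
    then obtain v j where "v \<in> Tri" "j \<in> {1,2,3}" "sd v j = e" "side_weight (g v) j \<noteq> (0,0)"
      unfolding supp_def by blast
    then show "e \<in> F"
      using sides by force
  next
    fix e assume e: "e \<in> F"
    obtain v where v: "v \<in> e" "v \<in> Tri"
      using edge_has_trinode[OF leaves3] e FE by blast
    obtain j where j: "j \<in> {1,2,3}" "sd v j = e"
      using side_surj[OF v(2)] e FE v(1) by blast
    have "g v \<noteq> (\<lambda>k. 0)"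
      using active_on_F[OF v(2)] e v(1) by blast
    then show "e \<in> supp V E sd g"
      using side_in_supp_iff[OF g(1) v(2) j(1)] sides[OF v(2) _ j(1)] e j(2) by simp
  qed
qed

lemma connected_atomic_with_supp:
  assumes leaves3: "3 \<le> card (leaves V E)" and F: "proper_subtree V E F"
    and v0: "v0 \<in> Tri" "j0 \<in> {1,2,3}" "sd v0 j0 \<in> F" and x: "x \<in> {(1,0), (0,1)}"
  obtains g where "connected_atomic g" "supp V E sd g = F" "side_weight (g v0) j0 = x"
proof -
  obtain s0 where s0: "fitting_atom F v0 s0" "side_weight s0 j0 = x"
    using fitting_atom_exists[OF F v0 x] by blast
  interpret along: atom_gluing V E sd "fitting_atom F" v0 s0
    by (rule atom_gluing_fitting[OF F v0(1) s0(1)])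
  obtain g where g: "inQ V E sd g" "g v0 = s0" "\<forall>v\<in>Tri. g v = (\<lambda>k. 0) \<or> fitting_atom F v (g v)"
    by (rule along.atom_gluing_exists)
  have "g v0 \<noteq> (\<lambda>k. 0)" "v0 \<in> \<Union>F"
    using g(2) s0(1) atom_nonzero unfolding fitting_atom_def by auto
  then have "supp V E sd g = F"
    using supp_fitting_gluing[OF leaves3 F g(1,3) v0(1)] by blast
  moreover have "g \<noteq> zeroQ"
    using \<open>g v0 \<noteq> (\<lambda>k. 0)\<close> unfolding zeroQ_def by metis
  moreover have "\<forall>v\<in>Tri. g v = (\<lambda>k. 0) \<or> g v \<in> atoms"
    using g(3) unfolding fitting_atom_def by blast
  ultimately show ?thesis
    using that g(1,2) s0(2) F unfolding connected_atomic_def proper_subtree_def by auto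
qed

lemma connected_atomic_eq_at:
  assumes h: "connected_atomic h1" "supp V E sd h1 = F" "connected_atomic h2" "supp V E sd h2 = F"
    and v: "v \<in> Tri" "j \<in> {1,2,3}" "sd v j \<in> F" and eq: "side_weight (h1 v) j = side_weight (h2 v) j"
  shows "h1 v = h2 v"
proof -
  have Q: "inQ V E sd h1" "inQ V E sd h2"
    and atomic: "h1 v = (\<lambda>k. 0) \<or> h1 v \<in> atoms" "h2 v = (\<lambda>k. 0) \<or> h2 v \<in> atoms"
    using h(1,3) v(1) unfolding connected_atomic_def by auto
  have sides: "side_weight (h1 v) i \<noteq> (0,0) \<longleftrightarrow> sd v i \<in> F"
      "side_weight (h2 v) i \<noteq> (0,0) \<longleftrightarrow> sd v i \<in> F" if "i \<in> {1,2,3}" for i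
    using side_in_supp_iff[OF Q(1) v(1) that] side_in_supp_iff[OF Q(2) v(1) that] h(2,4) by auto
  show ?thesis
  proof (rule atom_unique)
    show "h1 v \<in> atoms" "h2 v \<in> atoms"
      using atomic sides[OF v(2)] v(3) by auto
    show "\<forall>i\<in>{1,2,3}. (side_weight (h1 v) i = (0,0)) = (side_weight (h2 v) i = (0,0))"
      using sides by blast
    show "side_weight (h1 v) j \<noteq> (0,0)"
      using sides[OF v(2)] v(3) by blast
  qed (fact v(2) eq)+
qed

text \<open>Along an edge the matching condition transports the side weight from one atom to the next.\<close>
lemma connected_atomic_unique:
  assumes h: "connected_atomic h1" "supp V E sd h1 = F" "connected_atomic h2" "supp V E sd h2 = F"
    and F: "proper_subtree V E F" and v0: "v0 \<in> Tri" "j0 \<in> {1,2,3}" "sd v0 j0 \<in> F"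
    and eq: "side_weight (h1 v0) j0 = side_weight (h2 v0) j0"
  shows "h1 = h2"
proof -
  have FE: "F \<subseteq> E" and Fc: "graph_connected (\<Union>F) F"
    using F unfolding proper_subtree_def by auto
  have Q: "inQ V E sd h1" "inQ V E sd h2"
    using h(1,3) unfolding connected_atomic_def by auto
  have on_F: "h1 v = h2 v" if "v \<in> Tri" "v \<in> \<Union>F" for v
  proof (rule connected_propagate[OF FE Fc v0(1)])
    show "v0 \<in> \<Union>F"
      using v0 side_edge by blast
    show "h1 v0 = h2 v0"
      by (rule connected_atomic_eq_at[OF h v0 eq])
  next
    fix a b assume ab: "a \<in> Tri" "b \<in> Tri" "{a,b} \<in> F" "a \<noteq> b" "h1 a = h2 a"
    obtain j where j: "j \<in> {1,2,3}" "sd a j = {a,b}"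
      using side_surj[OF ab(1)] ab(3) FE by blast
    obtain j' where j': "j' \<in> {1,2,3}" "sd b j' = {a,b}"
      using side_surj[OF ab(2)] ab(3) FE by blast
    have "side_weight (h1 a) j = prod.swap (side_weight (h1 b) j')"
      "side_weight (h2 a) j = prod.swap (side_weight (h2 b) j')"
      using inQ_glue[OF Q(1) ab(1,2,4) j(1) j'(1)] inQ_glue[OF Q(2) ab(1,2,4) j(1) j'(1)] j(2) j'(2)
      by simp_all
    then have "side_weight (h1 b) j' = side_weight (h2 b) j'"
      using ab(5) by (metis swap_swap)
    then show "h1 b = h2 b"
      using connected_atomic_eq_at[OF h ab(2) j'(1)] j'(2) ab(3) by simp
  qed (use that in auto)
  show ?thesis
  proof (rule ext)
    fix v
    consider "v \<notin> Tri" | "v \<in> Tri" "v \<in> \<Union>F" | "v \<in> Tri" "h1 v = (\<lambda>k. 0)" "h2 v = (\<lambda>k. 0)"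
      using nonzero_Tri_in_supp[OF Q(1)] nonzero_Tri_in_supp[OF Q(2)] h(2,4) by blast
    then show "h1 v = h2 v"
      using inQ_off_Tri[OF Q(1)] inQ_off_Tri[OF Q(2)] on_F by cases auto
  qed
qed

lemma card_min_gen_supp:
  assumes leaves3: "3 \<le> card (leaves V E)" and F: "proper_subtree V E F"
  shows "card {w. min_gen V E sd w \<and> supp V E sd w = F} = 2"
proof -
  obtain e0 where e0: "e0 \<in> F" "e0 \<in> E"
    using F unfolding proper_subtree_def by blast
  obtain v0 where v0: "v0 \<in> e0" "v0 \<in> Tri"
    using edge_has_trinode[OF leaves3 e0(2)] by blast
  obtain j0 where j0: "j0 \<in> {1,2,3}" "sd v0 j0 \<in> F"
    using side_surj[OF v0(2) e0(2) v0(1)] e0(1) by blast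
  obtain g1 where g1: "connected_atomic g1" "supp V E sd g1 = F" "side_weight (g1 v0) j0 = (1,0)"
    using connected_atomic_with_supp[OF leaves3 F v0(2) j0] by blast
  obtain g2 where g2: "connected_atomic g2" "supp V E sd g2 = F" "side_weight (g2 v0) j0 = (0,1)"
    using connected_atomic_with_supp[OF leaves3 F v0(2) j0] by blast
  have "h \<in> {g1, g2}" if h: "connected_atomic h" "supp V E sd h = F" for h
  proof -
    have "inQ V E sd h" "h v0 = (\<lambda>k. 0) \<or> h v0 \<in> atoms"
      using h(1) v0(2) unfolding connected_atomic_def by auto
    moreover have "side_weight (h v0) j0 \<noteq> (0,0)"
      using side_in_supp_iff[OF _ v0(2) j0(1)] h(2) j0(2) calculation(1) by blast
    ultimately have "side_weight (h v0) j0 \<in> {(1,0), (0,1)}"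
      using atom_side_weight[OF _ j0(1)] by fastforce
    then show ?thesis
      using connected_atomic_unique[OF h _ _ F v0(2) j0] g1 g2 by auto
  qed
  then have "{w. min_gen V E sd w \<and> supp V E sd w = F} = {g1, g2}"
    using g1 g2 min_gen_iff_connected_atomic by auto
  moreover have "g1 \<noteq> g2"
    using g1(3) g2(3) by auto
  ultimately show ?thesis
    by simp
qed

section \<open>Proper subtrees and their leaves\<close>

definition subtree_leaves :: "'v set set \<Rightarrow> 'v set" where
  "subtree_leaves F = \<Union>F \<inter> leaves V E"

lemma no_bypass_subset:
  assumes "{a,b} \<in> E" "G \<subseteq> E" "{a,b} \<notin> G" "(adj G)\<^sup>*\<^sup>* a b"
  shows False
proof -
  have "G \<subseteq> E - {{a,b}}"
    using assms(2,3) by blast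
  then show False
    using no_bypass[OF assms(1)] adj_rtranclp_mono[OF assms(4)] by blast
qed

lemma reachable_avoiding_shrinks:
  assumes F: "F \<subseteq> E" and a: "a \<in> e" and e': "{a,a'} \<in> F" "{a,a'} \<noteq> e"
  shows "{z. (adj (F - {{a,a'}}))\<^sup>*\<^sup>* a' z} \<subset> {z. (adj (F - {e}))\<^sup>*\<^sup>* a z}"
    (is "?A \<subset> ?B")
proof -
  have not_a: "z \<noteq> a" if "(adj (F - {{a,a'}}))\<^sup>*\<^sup>* a' z" for z
  proof
    assume "z = a"
    then have "(adj (F - {{a,a'}}))\<^sup>*\<^sup>* a a'"
      using adj_rtranclp_sym[OF that] by simp
    moreover have "{a,a'} \<in> E" "F - {{a,a'}} \<subseteq> E"
      using F e'(1) by auto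
    ultimately show False
      using no_bypass_subset by blast
  qed
  have reach: "(adj (F - {e}))\<^sup>*\<^sup>* a' z" if "(adj (F - {{a,a'}}))\<^sup>*\<^sup>* a' z" for z
    using that
  proof (induction rule: rtranclp_induct)
    case (step y z)
    have "y \<noteq> a" "z \<noteq> a"
      using not_a step(1) rtranclp.rtrancl_into_rtrancl[OF step(1,2)] by auto
    then have "adj (F - {e}) y z"
      using step(2) a unfolding adj_def by auto
    then show ?case
      by (rule rtranclp.rtrancl_into_rtrancl[OF step(3)])
  qed simp
  have edge: "adj (F - {e}) a a'"
    using e' unfolding adj_def by simp
  have "?A \<subseteq> ?B"
  proof
    fix z assume "z \<in> ?A"
    then have "(adj (F - {e}))\<^sup>*\<^sup>* a z"
      using converse_rtranclp_into_rtranclp[OF edge reach] by simp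
    then show "z \<in> ?B"
      by simp
  qed
  moreover have "a \<in> ?B" "a \<notin> ?A"
    using not_a by auto
  then have "?A \<noteq> ?B"
    by metis
  ultimately show ?thesis
    by (rule psubsetI)
qed

text \<open>From an endpoint of an edge of a proper subtree one can walk away from that edge to a leaf
  of the subtree: at a trinode the walk can always continue, and the reachable set shrinks.\<close>
lemma proper_subtree_leaf_beyond:
  assumes F: "proper_subtree V E F" and "e \<in> F" "a \<in> e"
  shows "\<exists>l\<in>subtree_leaves F. (adj (F - {e}))\<^sup>*\<^sup>* a l"
  using assms(2,3)
proof (induction "card {z. (adj (F - {e}))\<^sup>*\<^sup>* a z}" arbitrary: a e rule: less_induct)
  case less
  have FE: "F \<subseteq> E"
    using F unfolding proper_subtree_def by blast
  have aF: "a \<in> \<Union>F" and aV: "a \<in> V"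
    using less(2,3) FE edge_subset_V by blast+
  show ?case
  proof (cases "a \<in> leaves V E")
    case True
    then show ?thesis
      unfolding subtree_leaves_def using aF by blast
  next
    case False
    then have "deg F a \<noteq> 1"
      using F aF unfolding proper_subtree_def by blast
    have "{g \<in> F. a \<in> g} \<noteq> {e}"
    proof
      assume eq: "{g \<in> F. a \<in> g} = {e}"
      have "card {g \<in> F. a \<in> g} = 1"
        unfolding eq by simp
      then show False
        using \<open>deg F a \<noteq> 1\<close> unfolding deg_def by simp
    qed
    then obtain e' where e': "e' \<in> F" "a \<in> e'" "e' \<noteq> e"
      using less(2,3) by blast
    obtain u w where uw: "e' = {u,w}"
      using edgeE[OF subsetD[OF FE e'(1)]] by blast
    define a' where "a' = (if u = a then w else u)"
    have ea': "e' = {a,a'}"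
      using uw e'(2) unfolding a'_def by auto
    have shrink: "{z. (adj (F - {e'}))\<^sup>*\<^sup>* a' z} \<subset> {z. (adj (F - {e}))\<^sup>*\<^sup>* a z}"
      using reachable_avoiding_shrinks[OF FE less(3)] e' ea' by simp
    moreover have "finite {z. (adj (F - {e}))\<^sup>*\<^sup>* a z}"
      by (rule finite_reachable) (use FE in blast)
    ultimately have "card {z. (adj (F - {e'}))\<^sup>*\<^sup>* a' z} < card {z. (adj (F - {e}))\<^sup>*\<^sup>* a z}"
      by (rule psubset_card_mono[rotated])
    moreover have "a' \<in> e'"
      using ea' by simp
    ultimately have "\<exists>l\<in>subtree_leaves F. (adj (F - {e'}))\<^sup>*\<^sup>* a' l"
      using less(1)[of e' a'] e'(1) by simp
    then obtain l where l: "l \<in> subtree_leaves F" "l \<in> {z. (adj (F - {e'}))\<^sup>*\<^sup>* a' z}"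
      by blast
    have "(adj (F - {e}))\<^sup>*\<^sup>* a l"
      using psubsetD[OF shrink l(2)] by simp
    then show ?thesis
      using l(1) by (rule bexI)
  qed
qed

lemma proper_subtree_edge_separates:
  assumes F: "proper_subtree V E F" and e: "{a,b} \<in> F"
  obtains la lb where "la \<in> subtree_leaves F" "lb \<in> subtree_leaves F"
    "\<not> (adj (E - {{a,b}}))\<^sup>*\<^sup>* la lb"
proof -
  have FE: "F \<subseteq> E"
    using F unfolding proper_subtree_def by blast
  obtain la where la: "la \<in> subtree_leaves F" "(adj (F - {{a,b}}))\<^sup>*\<^sup>* a la"
    using proper_subtree_leaf_beyond[OF F e] by blast
  obtain lb where lb: "lb \<in> subtree_leaves F" "(adj (F - {{a,b}}))\<^sup>*\<^sup>* b lb"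
    using proper_subtree_leaf_beyond[OF F e] by blast
  have "\<not> (adj (E - {{a,b}}))\<^sup>*\<^sup>* la lb"
  proof
    assume "(adj (E - {{a,b}}))\<^sup>*\<^sup>* la lb"
    moreover have sub: "F - {{a,b}} \<subseteq> E - {{a,b}}"
      using FE by blast
    have "(adj (E - {{a,b}}))\<^sup>*\<^sup>* a la" "(adj (E - {{a,b}}))\<^sup>*\<^sup>* lb b"
      using adj_rtranclp_mono[OF la(2) sub] adj_rtranclp_mono[OF adj_rtranclp_sym[OF lb(2)] sub] .
    ultimately have "(adj (E - {{a,b}}))\<^sup>*\<^sup>* a b"
      using rtranclp_trans by metis
    then show False
      using no_bypass[OF subsetD[OF FE e]] by blast
  qed
  then show ?thesis
    using that la(1) lb(1) by blast
qed

lemma card_subtree_leaves: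
  assumes F: "proper_subtree V E F"
  shows "2 \<le> card (subtree_leaves F)"
proof -
  obtain e where e: "e \<in> F" "e \<in> E"
    using F unfolding proper_subtree_def by blast
  obtain a b where ab: "e = {a,b}"
    using edgeE[OF e(2)] by blast
  obtain la lb where l: "la \<in> subtree_leaves F" "lb \<in> subtree_leaves F" "\<not> (adj (E - {{a,b}}))\<^sup>*\<^sup>* la lb"
    using proper_subtree_edge_separates[OF F] e(1) ab by blast
  then have "la \<noteq> lb"
    by auto
  moreover have "finite (subtree_leaves F)"
    unfolding subtree_leaves_def leaves_def using finite_V by simp
  ultimately have "card {la, lb} \<le> card (subtree_leaves F)"
    using l(1,2) by (intro card_mono) auto
  then show ?thesis
    using \<open>la \<noteq> lb\<close> by simp
qed

lemma subtree_leaves_determine: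
  assumes F1: "proper_subtree V E F1" and F2: "proper_subtree V E F2"
    and eq: "subtree_leaves F1 = subtree_leaves F2"
  shows "F1 \<subseteq> F2"
proof
  fix e assume e: "e \<in> F1"
  have F2E: "F2 \<subseteq> E" and conn2: "graph_connected (\<Union>F2) F2"
    using F2 unfolding proper_subtree_def by auto
  have "e \<in> E"
    using F1 e unfolding proper_subtree_def by blast
  then obtain a b where ab: "e = {a,b}"
    using edgeE by blast
  show "e \<in> F2"
  proof (rule ccontr)
    assume "e \<notin> F2"
    obtain la lb where l: "la \<in> subtree_leaves F1" "lb \<in> subtree_leaves F1"
      "\<not> (adj (E - {{a,b}}))\<^sup>*\<^sup>* la lb"
      using proper_subtree_edge_separates[OF F1] e ab by blast
    have "la \<in> \<Union>F2" "lb \<in> \<Union>F2"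
      using l(1,2) eq unfolding subtree_leaves_def by auto
    then have "(adj F2)\<^sup>*\<^sup>* la lb"
      using conn2 unfolding graph_connected_def by blast
    moreover have "F2 \<subseteq> E - {{a,b}}"
      using F2E \<open>e \<notin> F2\<close> ab by blast
    ultimately show False
      using l(3) adj_rtranclp_mono by metis
  qed
qed

definition connected_cover :: "'v set \<Rightarrow> 'v set set \<Rightarrow> bool" where
  "connected_cover S G \<longleftrightarrow> G \<subseteq> E \<and> graph_connected (\<Union>G) G \<and> S \<subseteq> \<Union>G"

text \<open>Otherwise the pendant edge at x could be removed from the cover.\<close>
lemma minimal_connected_cover_pendant:
  assumes G: "connected_cover S G" and min: "\<And>G'. connected_cover S G' \<Longrightarrow> card G \<le> card G'"
    and S2: "2 \<le> card S" and x: "x \<in> \<Union>G" "deg G x = 1"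
  shows "x \<in> S"
proof (rule ccontr)
  assume xS: "x \<notin> S"
  have GE: "G \<subseteq> E" and Gc: "graph_connected (\<Union>G) G" and SG: "S \<subseteq> \<Union>G"
    using G unfolding connected_cover_def by auto
  obtain f where fx: "{g \<in> G. x \<in> g} = {f}"
    using x(2) unfolding deg_def by (rule card_1_singletonE)
  then have fG: "f \<in> G" and xf: "x \<in> f" and pendant: "\<And>g. g \<in> G \<Longrightarrow> x \<in> g \<Longrightarrow> g = f"
    by blast+
  obtain u w where uw: "f = {u,w}" "u \<noteq> w"
    using edgeE[OF subsetD[OF GE fG]] by blast
  define y where "y = (if u = x then w else u)"
  have fxy: "f = {x,y}" and xy: "x \<noteq> y"
    using uw xf unfolding y_def by auto
  have "S \<subseteq> \<Union>(G - {f})"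
  proof
    fix s assume s: "s \<in> S"
    show "s \<in> \<Union>(G - {f})"
    proof (rule ccontr)
      assume s_out: "s \<notin> \<Union>(G - {f})"
      then have "s = y"
        using s SG xS fxy by auto
      then have "\<And>g. g \<in> G \<Longrightarrow> y \<in> g \<Longrightarrow> g = {x,y}"
        using s_out fxy by blast
      then have "\<Union>G \<subseteq> {x,y}"
        using connected_isolated_edge[OF Gc fG[unfolded fxy] pendant[unfolded fxy]] by blast
      then have "S \<subseteq> {y}"
        using SG xS by blast
      then show False
        using S2 card_mono[of "{y}" S] by simp
    qed
  qed
  moreover have "graph_connected (\<Union>(G - {f})) (G - {f})"
    using connected_remove_pendant_edge[OF Gc fG[unfolded fxy] xy pendant[unfolded fxy]] fxy by simp
  ultimately have "connected_cover S (G - {f})"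
    unfolding connected_cover_def using GE by blast
  moreover have "finite G"
    using GE finite_E finite_subset by blast
  then have "card (G - {f}) < card G"
    using fG by (rule card_Diff1_less)
  ultimately show False
    using min leD by blast
qed

lemma proper_subtree_with_leaves:
  assumes SL: "S \<subseteq> leaves V E" and S2: "2 \<le> card S"
  obtains F where "proper_subtree V E F" "subtree_leaves F = S"
proof -
  have "connected_cover S E"
    unfolding connected_cover_def using connected Union_E SL unfolding leaves_def by auto
  then obtain G where G: "connected_cover S G" and min: "\<And>G'. connected_cover S G' \<Longrightarrow> card G \<le> card G'"
    using ex_has_least_nat[of "connected_cover S" E card] by blast
  have GE: "G \<subseteq> E" and Gc: "graph_connected (\<Union>G) G" and SG: "S \<subseteq> \<Union>G"
    using G unfolding connected_cover_def by auto
  note pendant_in_S = minimal_connected_cover_pendant[OF G min S2]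
  have "S \<noteq> {}"
    using S2 by auto
  then have "proper_subtree V E G"
    unfolding proper_subtree_def using GE Gc SG pendant_in_S SL by blast
  moreover have "subtree_leaves G = S"
  proof
    show "subtree_leaves G \<subseteq> S"
    proof
      fix x assume "x \<in> subtree_leaves G"
      then have xG: "x \<in> \<Union>G" and "deg E x = 1"
        unfolding subtree_leaves_def leaves_def by auto
      moreover have "deg G x \<le> deg E x"
        unfolding deg_def using GE finite_E by (intro card_mono) auto
      moreover have "finite G"
        using GE finite_E finite_subset by blast
      then have "deg G x \<noteq> 0"
        using xG unfolding deg_def by auto
      ultimately show "x \<in> S"
        using pendant_in_S by simp
    qed
    show "S \<subseteq> subtree_leaves G"
      unfolding subtree_leaves_def using SG SL by blast
  qed
  ultimately show ?thesis
    using that by blast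
qed

lemma card_proper_subtrees:
  "card {F. proper_subtree V E F} = 2 ^ card (leaves V E) - card (leaves V E) - 1"
proof -
  have "bij_betw subtree_leaves {F. proper_subtree V E F} {S. S \<subseteq> leaves V E \<and> 2 \<le> card S}"
    unfolding bij_betw_def
  proof
    show "inj_on subtree_leaves {F. proper_subtree V E F}"
      using subtree_leaves_determine by (intro inj_onI) (simp add: subset_antisym)
    show "subtree_leaves ` {F. proper_subtree V E F} = {S. S \<subseteq> leaves V E \<and> 2 \<le> card S}"
    proof (intro equalityI subsetI)
      fix S assume "S \<in> subtree_leaves ` {F. proper_subtree V E F}"
      then show "S \<in> {S. S \<subseteq> leaves V E \<and> 2 \<le> card S}"
        using card_subtree_leaves unfolding subtree_leaves_def by auto
    next
      fix S assume "S \<in> {S. S \<subseteq> leaves V E \<and> 2 \<le> card S}"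
      then obtain F where "proper_subtree V E F" "subtree_leaves F = S"
        using proper_subtree_with_leaves by blast
      then show "S \<in> subtree_leaves ` {F. proper_subtree V E F}"
        by blast
    qed
  qed
  then have "card {F. proper_subtree V E F} = card {S. S \<subseteq> leaves V E \<and> 2 \<le> card S}"
    by (rule bij_betw_same_card)
  also have "\<dots> = 2 ^ card (leaves V E) - card (leaves V E) - 1"
    by (rule card_subsets_ge_2) (simp add: leaves_def finite_V)
  finally show ?thesis .
qed

lemma finite_proper_subtrees: "finite {F. proper_subtree V E F}"
proof (rule finite_subset)
  show "{F. proper_subtree V E F} \<subseteq> Pow E"
    unfolding proper_subtree_def by blast
qed (simp add: finite_E)

lemma min_gen_supp_proper_subtree: "min_gen V E sd w \<Longrightarrow> proper_subtree V E (supp V E sd w)"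
  using min_gen_connected_atomic supp_proper_subtree unfolding connected_atomic_def by blast

lemma card_min_gen:
  assumes "3 \<le> card (leaves V E)"
  shows "card {w. min_gen V E sd w} = 2 * card {F. proper_subtree V E F}"
proof -
  let ?gens = "\<lambda>F. {w. min_gen V E sd w \<and> supp V E sd w = F}"
  have two: "card (?gens F) = 2" if "F \<in> {F. proper_subtree V E F}" for F
    using card_min_gen_supp[OF assms] that by simp
  have "{w. min_gen V E sd w} = (\<Union>F\<in>{F. proper_subtree V E F}. ?gens F)"
    using min_gen_supp_proper_subtree by blast
  also have "card \<dots> = (\<Sum>F\<in>{F. proper_subtree V E F}. card (?gens F))"
  proof (rule card_UN_disjoint[OF finite_proper_subtrees])
    show "\<forall>F\<in>{F. proper_subtree V E F}. finite (?gens F)"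
      using two by (metis card.infinite zero_neq_numeral)
  qed blast
  also have "\<dots> = 2 * card {F. proper_subtree V E F}"
    using two by simp
  finally show ?thesis .
qed

end

theorem mainTheorem2:
  fixes V :: "'v set" and E :: "'v set set" and sd :: "'v \<Rightarrow> nat \<Rightarrow> 'v set"
    and lab :: "'v \<Rightarrow> nat" and n :: nat
  assumes "trivalent_tree V E"
    and "bij_betw lab (leaves V E) {1..n}"
    and "n \<ge> 3"
    and "side_labelling V E sd"
  shows "(\<forall>E'. proper_subtree V E E' \<longrightarrow> card {w. min_gen V E sd w \<and> supp V E sd w = E'} = 2)
    \<and> (\<forall>w. min_gen V E sd w \<longrightarrow> proper_subtree V E (supp V E sd w))
    \<and> card {w. min_gen V E sd w} = 2 * (2 ^ n - n - 1)"
proof -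
  interpret labelled_trivalent_tree V E sd
    using assms(1,4) by unfold_locales
  have n: "card (leaves V E) = n"
    using bij_betw_same_card[OF assms(2)] by simp
  then show ?thesis
    using card_min_gen_supp min_gen_supp_proper_subtree card_min_gen card_proper_subtrees assms(3)
    by simp
qed

end
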